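(* Let $(G,v_G)$ be a rooted graph and let $g,h\ge 0$, $m\ge 2$ be integers. Let $K_m^{gh}(G,K_1)$ be the graph obtained from the disjoint union of $G$ and a complete graph $K_m$ with two distinct chosen vertices $x,y$ by adding a path of length $g$ joining $v_G$ and $x$ (identifying them if $g=0$) and attaching a pendant path of length $h$ at $y$. Then \[ \frac{X_{K_m^{gh}(G,K_1)}}{(m-2)!}=\sum_{z=1}^{m-1}z\,e_{m-1-z}\,X_{G^{g+h+z}}-(m-2)\sum_{z=1}^{m-1}\frac{X_{K_z^h}}{(z-1)!}\,X_{G^{m-1-z+g}}. \]
   Context: All graphs are finite simple graphs. The chromatic symmetric function of a graph $G$ is $X_G=\sum_{\kappa}\prod_{v\in V(G)}x_{\kappa(v)}$, where $\kappa$ ranges over proper colorings $\kappa:V(G)\to\{1,2,\dots\}$; $e_a$ is the $a$-th elementary symmetric function, $e_0=1$. For a rooted graph $G$ and $k\ge 0$, the tailed graph $G^k$ is $G$ with a pendant path of length $k$ (with $k$ new vertices) attached at its root. $K_z^h$ is the lollipop: the complete graph $K_z$ with a pendant path of length $h$ attached at one vertex. *)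

theory Defs
  imports Complex_Main "HOL-Library.FuncSet" "HOL-Library.Poly_Mapping"
begin

text \<open>Symmetric functions (in the variables x_1, x_2, ...) are represented by their
  coefficient functions: a monomial is an exponent vector finitely supported nat to nat map, where
  index i stands for the variable x_i (index 0 is never used).\<close>

type_synonym 'v graph = "'v set \<times> ('v \<Rightarrow> 'v \<Rightarrow> bool)"
type_synonym sf = "(nat \<Rightarrow>\<^sub>0 nat) \<Rightarrow> rat"

definition proper_coloring :: "'v graph \<Rightarrow> ('v \<Rightarrow> nat) \<Rightarrow> bool" where
  "proper_coloring G \<kappa> \<longleftrightarrow>
     \<kappa> \<in> fst G \<rightarrow>\<^sub>E {1..} \<and> (\<forall>u\<in>fst G. \<forall>v\<in>fst G. snd G u v \<longrightarrow> \<kappa> u \<noteq> \<kappa> v)"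

definition csf :: "'v graph \<Rightarrow> sf" where
  "csf G \<alpha> = of_nat (card {\<kappa>. proper_coloring G \<kappa> \<and>
                          (\<forall>i. card {v\<in>fst G. \<kappa> v = i} = Poly_Mapping.lookup \<alpha> i)})"

definition elem_sf :: "nat \<Rightarrow> sf" where
  "elem_sf a \<alpha> = (if Poly_Mapping.lookup \<alpha> 0 = 0 \<and> (\<forall>i. Poly_Mapping.lookup \<alpha> i \<le> 1) \<and> sum (Poly_Mapping.lookup \<alpha>) (Poly_Mapping.keys \<alpha>) = a
                   then 1 else 0)"

definition sf_mult :: "sf \<Rightarrow> sf \<Rightarrow> sf" where
  "sf_mult f g \<alpha> = (\<Sum>(\<beta>,\<gamma>)\<in>{(\<beta>,\<gamma>). \<beta> + \<gamma> = \<alpha>}. f \<beta> * g \<gamma>)"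

definition mk_graph :: "'v set \<Rightarrow> ('v \<times> 'v) set \<Rightarrow> 'v graph" where
  "mk_graph V S = (V, \<lambda>u v. (u, v) \<in> S \<or> (v, u) \<in> S)"

text \<open>Tailed graph G^k for a rooted graph (G, r): new vertices Inr 1, ..., Inr k,
  path Inl r -- Inr 1 -- ... -- Inr k.\<close>
definition tail_vertex :: "'a \<Rightarrow> nat \<Rightarrow> 'a + nat" where
  "tail_vertex r i = (if i = 0 then Inl r else Inr i)"

definition tailed :: "'a graph \<Rightarrow> 'a \<Rightarrow> nat \<Rightarrow> ('a + nat) graph" where
  "tailed G r k = mk_graph (Inl ` fst G \<union> Inr ` {1..k})
     ({(Inl u, Inl v) | u v. u \<in> fst G \<and> v \<in> fst G \<and> snd G u v} \<union>
      {(tail_vertex r i, tail_vertex r (i+1)) | i. i < k})"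

text \<open>Lollipop K_z^h: clique on {0..<z}, pendant path z-1 -- z -- ... -- z+h-1.\<close>
definition lollipop :: "nat \<Rightarrow> nat \<Rightarrow> nat graph" where
  "lollipop z h = mk_graph {0..<z+h}
     ({(i, j) | i j. i < j \<and> j < z} \<union> {(z - 1 + i, z + i) | i. i < h})"

text \<open>Clique vertices: x and Inr (1,j) for 1 \<le> j < m, with y = Inr (1,1);
  internal path vertices Inr (0,i), 0 < i < g; tail vertices Inr (2,i), 1 \<le> i \<le> h.\<close>
definition Kgh_x :: "'a \<Rightarrow> nat \<Rightarrow> 'a + nat \<times> nat" where
  "Kgh_x r g = (if g = 0 then Inl r else Inr (1, 0))"

definition Kgh_path :: "'a \<Rightarrow> nat \<Rightarrow> nat \<Rightarrow> 'a + nat \<times> nat" where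
  "Kgh_path r g i = (if i = 0 then Inl r else if i = g then Kgh_x r g else Inr (0, i))"

definition Kgh_tail :: "nat \<Rightarrow> 'a + nat \<times> nat" where
  "Kgh_tail i = Inr (2, i)"

definition Kgh_clique :: "'a \<Rightarrow> nat \<Rightarrow> nat \<Rightarrow> ('a + nat \<times> nat) set" where
  "Kgh_clique r g m = insert (Kgh_x r g) {Inr (1, j) | j. 1 \<le> j \<and> j < m}"

definition Kgh :: "'a graph \<Rightarrow> 'a \<Rightarrow> nat \<Rightarrow> nat \<Rightarrow> nat \<Rightarrow> ('a + nat \<times> nat) graph" where
  "Kgh G r m g h = mk_graph
     (Inl ` fst G \<union> Kgh_path r g ` {0..g} \<union> Kgh_clique r g m \<union> Kgh_tail ` {1..h})
     ({(Inl u, Inl v) | u v. u \<in> fst G \<and> v \<in> fst G \<and> snd G u v} \<union>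
      {(Kgh_path r g i, Kgh_path r g (i+1)) | i. i < g} \<union>
      {(u, v) | u v. u \<in> Kgh_clique r g m \<and> v \<in> Kgh_clique r g m \<and> u \<noteq> v} \<union>
      {(Inr (1, 1), Kgh_tail 1) | _::unit. 0 < h} \<union>
      {(Kgh_tail i, Kgh_tail (i+1)) | i. 1 \<le> i \<and> i < h})"

end

(*
  Fix N at least the largest variable index occurring in the monomial alpha. Every chromatic
  symmetric function in the statement then agrees, at alpha and at all its divisors, with the
  polynomial in x_1, ..., x_N obtained by summing the weights of the proper colourings with colours
  in {1..N}. Those sums are evaluated by removing vertices one at a time: the tail at y gives a
  tail polynomial T_h(q) of the colour q of y, the m - 2 remaining clique vertices give
  (m - 2)! e_(m-2) of the colours not used by x and y, and the path from the root of G to x gives a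
  walk polynomial. What is left is an identity for a fixed colour s of x, which follows from
  generating functions: for E(t) = prod_c (1 + x_c t), the series T_s(t) = sum_k T_k(s) t^k
  satisfies (E - t E') T_s = E without the factor of colour s.
*)
theory Submission
  imports Defs "HOL-Computational_Algebra.Formal_Power_Series"
begin

unbundle fps_syntax

type_synonym xpoly = "(nat \<Rightarrow>\<^sub>0 nat) \<Rightarrow>\<^sub>0 rat"

definition xvar :: "nat \<Rightarrow> xpoly" where
  "xvar i = Poly_Mapping.single (Poly_Mapping.single i 1) 1"

definition lin_factor :: "nat \<Rightarrow> xpoly fps" where
  "lin_factor c = 1 + fps_const (xvar c) * fps_X"

definition elem_fps :: "nat set \<Rightarrow> xpoly fps" where
  "elem_fps D = (\<Prod>c\<in>D. lin_factor c)"

lemma elem_fps_insert: "finite D \<Longrightarrow> a \<notin> D \<Longrightarrow> elem_fps (insert a D) = lin_factor a * elem_fps D"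
  by (simp add: elem_fps_def)

lemma elem_fps_remove: "finite D \<Longrightarrow> a \<in> D \<Longrightarrow> elem_fps D = lin_factor a * elem_fps (D - {a})"
  unfolding elem_fps_def by (simp add: prod.remove)

lemma lin_factor_cancel: "lin_factor a * A = lin_factor a * B \<Longrightarrow> A = B"
proof -
  have "lin_factor a $ 0 \<noteq> 0" by (simp add: lin_factor_def)
  then show "lin_factor a * A = lin_factor a * B \<Longrightarrow> A = B" by auto
qed

lemma elem_fps_nth_0: "finite D \<Longrightarrow> elem_fps D $ 0 = 1"
  by (induction D rule: finite_induct) (simp_all add: elem_fps_def lin_factor_def)

lemma elem_fps_remove_nth:
  assumes "finite D" "s \<in> D"
  shows "elem_fps D $ Suc j = elem_fps (D - {s}) $ Suc j + xvar s * elem_fps (D - {s}) $ j"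
  using elem_fps_remove[OF assms] by (simp add: lin_factor_def algebra_simps)

lemma fps_X_mult_deriv_elem_fps:
  assumes "finite D"
  shows "fps_X * fps_deriv (elem_fps D) = (\<Sum>c\<in>D. fps_const (xvar c) * fps_X * elem_fps (D - {c}))"
  using assms
proof (induction D rule: finite_induct)
  case empty
  then show ?case by (simp add: elem_fps_def)
next
  case (insert a D)
  have "elem_fps (insert a D - {c}) = lin_factor a * elem_fps (D - {c})" if "c \<in> D" for c
  proof -
    have "insert a D - {c} = insert a (D - {c})" using insert that by auto
    then show ?thesis using insert by (simp add: elem_fps_insert)
  qed
  moreover have "fps_X * fps_deriv (elem_fps (insert a D))
      = fps_const (xvar a) * fps_X * elem_fps D + lin_factor a * (fps_X * fps_deriv (elem_fps D))"
    using insert by (simp add: elem_fps_insert lin_factor_def algebra_simps)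
  ultimately show ?case
    using insert by (simp add: sum_distrib_left mult.left_commute)
qed

lemma sum_xvar_elem_fps_remove:
  assumes "finite D"
  shows "(\<Sum>q\<in>D. xvar q * elem_fps (D - {q}) $ k) = of_nat (Suc k) * elem_fps D $ Suc k"
proof -
  have "(\<Sum>c\<in>D. fps_const (xvar c) * fps_X * elem_fps (D - {c})) $ Suc k
      = (\<Sum>q\<in>D. xvar q * elem_fps (D - {q}) $ k)"
    by (simp only: fps_sum_nth mult.assoc fps_mult_left_const_nth) simp
  moreover have "(fps_X * fps_deriv (elem_fps D)) $ Suc k = of_nat (Suc k) * elem_fps D $ Suc k"
    by simp
  ultimately show ?thesis using fps_X_mult_deriv_elem_fps[OF assms] by simp
qed

lemma prod_fps_const_mult_X:
  "finite S \<Longrightarrow> (\<Prod>c\<in>S. fps_const (a c) * fps_X) = fps_const (prod a S) * fps_X ^ card S"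
proof (induction S rule: finite_induct)
  case (insert x S)
  then show ?case by (simp add: mult_ac flip: fps_const_mult)
qed simp

lemma elem_fps_nth:
  assumes "finite D"
  shows "elem_fps D $ k = (\<Sum>S | S \<subseteq> D \<and> card S = k. prod xvar S)"
proof -
  have "elem_fps D = (\<Sum>S\<in>Pow D. fps_const (prod xvar S) * fps_X ^ card S)"
    unfolding elem_fps_def lin_factor_def using assms
  proof (subst add.commute, subst prod_add)
    show "(\<Sum>S\<in>Pow D. (\<Prod>c\<in>S. fps_const (xvar c) * fps_X) * (\<Prod>c\<in>D - S. 1))
        = (\<Sum>S\<in>Pow D. fps_const (prod xvar S) * fps_X ^ card S)"
      using assms by (intro sum.cong refl) (simp add: prod_fps_const_mult_X finite_subset)
  qed (rule assms)
  then have "elem_fps D $ k = (\<Sum>S\<in>Pow D. (fps_const (prod xvar S) * fps_X ^ card S) $ k)"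
    by (simp add: fps_sum_nth)
  also have "\<dots> = (\<Sum>S\<in>Pow D. if card S = k then prod xvar S else 0)"
    by (intro sum.cong refl) simp
  also have "\<dots> = sum (prod xvar) {S \<in> Pow D. card S = k}"
    using assms by (simp only: sum.inter_filter finite_Pow_iff)
  also have "{S \<in> Pow D. card S = k} = {S. S \<subseteq> D \<and> card S = k}"
    by auto
  finally show ?thesis .
qed

text \<open>\<open>walk N k s q\<close> is the weight of the proper colourings with colours in \<open>{1..N}\<close> of a
  path \<open>v_0 ... v_k\<close> in which \<open>v_0\<close> has colour \<open>s\<close> and \<open>v_k\<close> has colour \<open>q\<close>; the vertex
  \<open>v_0\<close> itself is not weighted.\<close>

fun walk :: "nat \<Rightarrow> nat \<Rightarrow> nat \<Rightarrow> nat \<Rightarrow> xpoly" where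
  "walk N 0 s q = (if s = q then 1 else 0)"
| "walk N (Suc k) s q = xvar q * (\<Sum>c\<in>{1..N} - {q}. walk N k s c)"

definition tail_poly :: "nat \<Rightarrow> nat \<Rightarrow> nat \<Rightarrow> xpoly" where
  "tail_poly N k s = (\<Sum>q\<in>{1..N}. walk N k s q)"

definition walk_avoid :: "nat \<Rightarrow> nat \<Rightarrow> nat \<Rightarrow> nat \<Rightarrow> xpoly" where
  "walk_avoid N k s q = (\<Sum>c\<in>{1..N} - {q}. walk N k s c)"

lemma walk_add:
  assumes "q \<in> {1..N}"
  shows "walk N (a + b) p q = (\<Sum>s\<in>{1..N}. walk N a p s * walk N b s q)"
  using assms
proof (induction b arbitrary: q)
  case 0
  then show ?case by (simp add: if_distrib[of "(*) _"] sum.delta' cong: if_cong)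
next
  case (Suc b)
  have "walk N (a + Suc b) p q = xvar q * (\<Sum>c\<in>{1..N} - {q}. \<Sum>s\<in>{1..N}. walk N a p s * walk N b s c)"
    using Suc.IH by simp
  also have "\<dots> = (\<Sum>s\<in>{1..N}. walk N a p s * (xvar q * (\<Sum>c\<in>{1..N} - {q}. walk N b s c)))"
    by (simp add: sum_distrib_left algebra_simps) (rule sum.swap)
  finally show ?case by simp
qed

lemma tail_poly_add: "tail_poly N (a + b) p = (\<Sum>s\<in>{1..N}. walk N a p s * tail_poly N b s)"
  unfolding tail_poly_def by (simp add: walk_add sum_distrib_left) (rule sum.swap)

lemma tail_poly_0: "s \<in> {1..N} \<Longrightarrow> tail_poly N 0 s = 1"
  by (simp add: tail_poly_def)

lemma tail_poly_Suc:
  assumes "s \<in> {1..N}"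
  shows "tail_poly N (Suc j) s = (\<Sum>c\<in>{1..N} - {s}. xvar c * tail_poly N j c)"
proof -
  have "tail_poly N (1 + j) s = (\<Sum>c\<in>{1..N}. (if c = s then 0 else xvar c) * tail_poly N j c)"
    unfolding tail_poly_add using assms by (intro sum.cong) auto
  also have "\<dots> = (\<Sum>c\<in>{1..N} - {s}. xvar c * tail_poly N j c)"
    by (rule sum.mono_neutral_cong_right) auto
  finally show ?thesis by simp
qed

lemma walk_avoid_eq: "q \<in> {1..N} \<Longrightarrow> walk_avoid N k s q = tail_poly N k s - walk N k s q"
  unfolding walk_avoid_def tail_poly_def by (simp add: sum_diff1)

definition tail_fps :: "nat \<Rightarrow> nat \<Rightarrow> xpoly fps" where
  "tail_fps N s = Abs_fps (\<lambda>j. tail_poly N j s)"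

definition walk_avoid_fps :: "nat \<Rightarrow> nat \<Rightarrow> nat \<Rightarrow> xpoly fps" where
  "walk_avoid_fps N s q = Abs_fps (\<lambda>j. walk_avoid N j s q)"

definition tail_denominator :: "nat \<Rightarrow> xpoly fps" where
  "tail_denominator N = elem_fps {1..N} - fps_X * fps_deriv (elem_fps {1..N})"

lemma tail_denominator_nth: "tail_denominator N $ k = (1 - of_nat k) * elem_fps {1..N} $ k"
  by (cases k) (simp_all add: tail_denominator_def algebra_simps)

lemma tail_fps_unfold:
  assumes "s \<in> {1..N}"
  shows "tail_fps N s = 1 + fps_X * (\<Sum>c\<in>{1..N} - {s}. fps_const (xvar c) * tail_fps N c)"
proof (rule fps_ext)
  fix n
  show "tail_fps N s $ n = (1 + fps_X * (\<Sum>c\<in>{1..N} - {s}. fps_const (xvar c) * tail_fps N c)) $ n"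
    using assms by (cases n) (auto simp: tail_fps_def tail_poly_0 tail_poly_Suc fps_sum_nth)
qed

lemma fps_eq_0_if_X_recursion:
  assumes rec: "\<And>s. s \<in> C \<Longrightarrow> D s = fps_X * (\<Sum>c\<in>C - {s}. fps_const (a c) * D c)"
    and "s \<in> C"
  shows "D s = (0 :: 'a::comm_ring_1 fps)"
proof -
  have "\<forall>s\<in>C. D s $ n = 0" for n
  proof (induction n)
    case 0
    show ?case
    proof
      fix s assume "s \<in> C"
      then show "D s $ 0 = 0" using rec[of s] by simp
    qed
  next
    case (Suc n)
    show ?case
    proof
      fix s assume "s \<in> C"
      then have "D s $ Suc n = (\<Sum>c\<in>C - {s}. a c * D c $ n)"
        using rec by (simp add: fps_sum_nth)
      then show "D s $ Suc n = 0" using Suc.IH by simp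
    qed
  qed
  then show ?thesis using assms(2) by (intro fps_ext) simp
qed

text \<open>With \<open>E = elem_fps {1..N}\<close>, the recursion \<open>T_s = 1 + t * (\<Sum>c \<noteq> s. x_c T_c)\<close> of
  \<open>tail_fps_unfold\<close> is also satisfied by \<open>E_{C-{s}} / (E - t E')\<close>, and it has only one
  solution.\<close>

lemma tail_denominator_mult_tail_fps:
  assumes "s \<in> {1..N}"
  shows "tail_denominator N * tail_fps N s = elem_fps ({1..N} - {s})"
proof -
  let ?C = "{1..N::nat}" and ?Q = "tail_denominator N"
  have init: "?Q + fps_X * (\<Sum>c\<in>?C - {s}. fps_const (xvar c) * elem_fps (?C - {c}))
      = elem_fps (?C - {s})" if "s \<in> ?C" for s
  proof -
    have "fps_X * (\<Sum>c\<in>?C - {s}. fps_const (xvar c) * elem_fps (?C - {c}))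
        = (\<Sum>c\<in>?C. fps_const (xvar c) * fps_X * elem_fps (?C - {c}))
          - fps_const (xvar s) * fps_X * elem_fps (?C - {s})"
      using that by (simp add: sum_diff1 sum_distrib_left algebra_simps)
    also have "\<dots> = fps_X * fps_deriv (elem_fps ?C) - fps_const (xvar s) * fps_X * elem_fps (?C - {s})"
      by (simp add: fps_X_mult_deriv_elem_fps)
    finally have X_sum: "fps_X * (\<Sum>c\<in>?C - {s}. fps_const (xvar c) * elem_fps (?C - {c}))
        = fps_X * fps_deriv (elem_fps ?C) - fps_const (xvar s) * fps_X * elem_fps (?C - {s})" .
    have "elem_fps ?C = lin_factor s * elem_fps (?C - {s})"
      using that by (simp add: elem_fps_remove)
    then show ?thesis
      unfolding tail_denominator_def X_sum by (simp add: lin_factor_def algebra_simps)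
  qed
  define D where "D s = ?Q * tail_fps N s - elem_fps (?C - {s})" for s
  have "D s = fps_X * (\<Sum>c\<in>?C - {s}. fps_const (xvar c) * D c)" if "s \<in> ?C" for s
  proof -
    have "D s = (?Q + fps_X * (\<Sum>c\<in>?C - {s}. fps_const (xvar c) * elem_fps (?C - {c}))
        - elem_fps (?C - {s})) + fps_X * (\<Sum>c\<in>?C - {s}. fps_const (xvar c) * D c)"
      unfolding D_def tail_fps_unfold[OF that]
      by (simp add: algebra_simps sum_distrib_left sum.distrib sum_subtractf)
    then show ?thesis using init[OF that] by simp
  qed
  then have "D s = 0" using assms by (rule fps_eq_0_if_X_recursion)
  then show ?thesis unfolding D_def by simp
qed

lemma lin_factor_mult_walk_avoid_fps:
  assumes "s \<in> {1..N}" "q \<in> {1..N}"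
  shows "lin_factor q * walk_avoid_fps N s q = tail_fps N s - (if s = q then 1 else 0)"
proof (rule fps_ext)
  fix n
  show "(lin_factor q * walk_avoid_fps N s q) $ n = (tail_fps N s - (if s = q then 1 else 0)) $ n"
  proof (cases n)
    case 0
    then show ?thesis using assms
      by (simp add: lin_factor_def walk_avoid_fps_def tail_fps_def tail_poly_0 walk_avoid_eq)
  next
    case (Suc k)
    have "walk_avoid N (Suc k) s q = tail_poly N (Suc k) s - xvar q * walk_avoid N k s q"
      using walk_avoid_eq[OF assms(2), of "Suc k" s] by (simp add: walk_avoid_def)
    then show ?thesis using Suc
      by (simp add: lin_factor_def walk_avoid_fps_def tail_fps_def algebra_simps)
  qed
qed

text \<open>Multiplied by \<open>1 + x_q t\<close>, this series becomes \<open>E_{C-{s}}\<close> when \<open>q \<noteq> s\<close> and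
  \<open>E_{C-{s}} - (E - t E' + c E)\<close> when \<open>q = s\<close>; the coefficient of \<open>t^c\<close> of the latter
  quotient vanishes.\<close>

definition pair_fps :: "nat \<Rightarrow> nat \<Rightarrow> nat \<Rightarrow> nat \<Rightarrow> xpoly fps" where
  "pair_fps N c s q = (tail_denominator N + fps_const (of_nat c) * elem_fps {1..N}) * walk_avoid_fps N s q
     - fps_const (of_nat c) * elem_fps ({1..N} - {q}) * tail_fps N s"

lemma lin_factor_mult_pair_fps:
  assumes "s \<in> {1..N}" "q \<in> {1..N}"
  shows "lin_factor q * pair_fps N c s q = elem_fps ({1..N} - {s})
     - (if s = q then tail_denominator N + fps_const (of_nat c) * elem_fps {1..N} else 0)"
proof -
  let ?P = "tail_denominator N + fps_const (of_nat c) * elem_fps {1..N}"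
  have "lin_factor q * pair_fps N c s q = ?P * (lin_factor q * walk_avoid_fps N s q)
     - fps_const (of_nat c) * (lin_factor q * elem_fps ({1..N} - {q})) * tail_fps N s"
    unfolding pair_fps_def by (simp add: algebra_simps)
  also have "\<dots> = ?P * (tail_fps N s - (if s = q then 1 else 0))
     - fps_const (of_nat c) * elem_fps {1..N} * tail_fps N s"
    using assms by (simp add: lin_factor_mult_walk_avoid_fps elem_fps_remove[symmetric])
  also have "\<dots> = tail_denominator N * tail_fps N s - (if s = q then ?P else 0)"
    by (simp add: algebra_simps)
  finally show ?thesis using tail_denominator_mult_tail_fps[OF assms(1)] by simp
qed

lemma pair_fps_off_diag:
  assumes "s \<in> {1..N}" "q \<in> {1..N}" "q \<noteq> s"
  shows "pair_fps N c s q = elem_fps ({1..N} - {s} - {q})"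
proof (rule lin_factor_cancel)
  have "elem_fps ({1..N} - {s}) = lin_factor q * elem_fps ({1..N} - {s} - {q})"
    using assms by (intro elem_fps_remove) auto
  then show "lin_factor q * pair_fps N c s q = lin_factor q * elem_fps ({1..N} - {s} - {q})"
    using lin_factor_mult_pair_fps[OF assms(1,2), of c] assms by simp
qed

lemma pair_fps_diag:
  assumes "s \<in> {1..N}"
  shows "pair_fps N c s s = Abs_fps (\<lambda>k. (of_nat k - of_nat c) * elem_fps ({1..N} - {s}) $ k)"
proof (rule lin_factor_cancel, rule fps_ext)
  fix k
  have "(lin_factor s * Abs_fps (\<lambda>k. (of_nat k - of_nat c) * elem_fps ({1..N} - {s}) $ k)) $ k
      = (elem_fps ({1..N} - {s}) - (tail_denominator N + fps_const (of_nat c) * elem_fps {1..N})) $ k"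
    using assms elem_fps_remove_nth[of "{1..N}" s]
    by (cases k) (simp_all add: lin_factor_def tail_denominator_nth elem_fps_nth_0 algebra_simps)
  then show "(lin_factor s * pair_fps N c s s) $ k
      = (lin_factor s * Abs_fps (\<lambda>k. (of_nat k - of_nat c) * elem_fps ({1..N} - {s}) $ k)) $ k"
    using lin_factor_mult_pair_fps[OF assms assms, of c] by simp
qed

lemma pair_fps_nth:
  "pair_fps N c s q $ c
     = (\<Sum>z=1..c+1. of_nat z * elem_fps {1..N} $ (c+1-z) * walk_avoid N (z-1) s q)
       - of_nat c * (\<Sum>z=1..c+1. elem_fps ({1..N} - {q}) $ (z-1) * tail_poly N (c+1-z) s)"
proof -
  have "((tail_denominator N + fps_const (of_nat c) * elem_fps {1..N}) * walk_avoid_fps N s q) $ c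
      = (\<Sum>i=0..c. of_nat (c + 1 - i) * elem_fps {1..N} $ i * walk_avoid N (c - i) s q)"
    unfolding fps_mult_nth
    by (intro sum.cong refl) (auto simp: tail_denominator_nth walk_avoid_fps_def of_nat_diff algebra_simps)
  also have "\<dots> = (\<Sum>z=1..c+1. of_nat z * elem_fps {1..N} $ (c+1-z) * walk_avoid N (z-1) s q)"
    by (rule sum.reindex_bij_witness[where i="\<lambda>z. c + 1 - z" and j="\<lambda>i. c + 1 - i"]) auto
  finally have first: "((tail_denominator N + fps_const (of_nat c) * elem_fps {1..N}) * walk_avoid_fps N s q) $ c
      = (\<Sum>z=1..c+1. of_nat z * elem_fps {1..N} $ (c+1-z) * walk_avoid N (z-1) s q)" .
  have "(fps_const (of_nat c) * elem_fps ({1..N} - {q}) * tail_fps N s) $ c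
      = of_nat c * (\<Sum>i=0..c. elem_fps ({1..N} - {q}) $ i * tail_poly N (c - i) s)"
    by (simp only: mult.assoc fps_mult_left_const_nth) (simp add: fps_mult_nth tail_fps_def)
  also have "(\<Sum>i=0..c. elem_fps ({1..N} - {q}) $ i * tail_poly N (c - i) s)
      = (\<Sum>z=1..c+1. elem_fps ({1..N} - {q}) $ (z-1) * tail_poly N (c+1-z) s)"
    by (rule sum.reindex_bij_witness[where i="\<lambda>z. z - 1" and j="\<lambda>i. i + 1"]) auto
  finally show ?thesis unfolding pair_fps_def using first by simp
qed

lemma elem_fps_remove_pair_eq:
  assumes "s \<in> {1..N}" "q \<in> {1..N}"
  shows "(if q \<noteq> s then elem_fps ({1..N} - {s} - {q}) $ c else 0)
     = (\<Sum>z=1..c+1. of_nat z * elem_fps {1..N} $ (c+1-z) * walk_avoid N (z-1) s q)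
       - of_nat c * (\<Sum>z=1..c+1. elem_fps ({1..N} - {q}) $ (z-1) * tail_poly N (c+1-z) s)"
  using pair_fps_nth[of N c s q] pair_fps_off_diag[OF assms, of c] pair_fps_diag[OF assms(1), of c]
  by (cases "q = s") simp_all

definition colourings :: "nat \<Rightarrow> ('v \<Rightarrow> 'v \<Rightarrow> bool) \<Rightarrow> 'v set \<Rightarrow> ('v \<Rightarrow> nat) set" where
  "colourings N adj W = {\<kappa> \<in> W \<rightarrow>\<^sub>E {1..N}. \<forall>u\<in>W. \<forall>v\<in>W. adj u v \<longrightarrow> \<kappa> u \<noteq> \<kappa> v}"

definition cweight :: "'v set \<Rightarrow> ('v \<Rightarrow> nat) \<Rightarrow> xpoly" where
  "cweight W \<kappa> = (\<Prod>v\<in>W. xvar (\<kappa> v))"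

lemma finite_colourings: "finite W \<Longrightarrow> finite (colourings N adj W)"
  unfolding colourings_def by (rule finite_subset[of _ "W \<rightarrow>\<^sub>E {1..N}"]) (auto intro: finite_PiE)

lemma colourings_restrict:
  "\<kappa> \<in> colourings N adj W \<Longrightarrow> W' \<subseteq> W \<Longrightarrow> restrict \<kappa> W' \<in> colourings N adj W'"
  unfolding colourings_def by (auto simp: PiE_iff)

lemma bij_betw_colourings_insert:
  assumes v: "v \<notin> W" and irrefl: "\<not> adj v v"
    and M: "M \<subseteq> W" "\<And>u. u \<in> W \<Longrightarrow> (adj u v \<or> adj v u) \<longleftrightarrow> u \<in> M"
  shows "bij_betw (\<lambda>\<kappa>. (restrict \<kappa> W, \<kappa> v)) (colourings N adj (insert v W))
           (SIGMA \<kappa>:colourings N adj W. {1..N} - \<kappa> ` M)"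
proof -
  have restrict_in: "(restrict \<kappa> W, \<kappa> v) \<in> (SIGMA \<kappa>:colourings N adj W. {1..N} - \<kappa> ` M)"
    if \<kappa>: "\<kappa> \<in> colourings N adj (insert v W)" for \<kappa>
  proof -
    have "\<kappa> v \<noteq> \<kappa> u" if "u \<in> M" for u
    proof -
      have "u \<in> W" "adj u v \<or> adj v u" using M that by auto
      then show ?thesis using \<kappa> unfolding colourings_def by fastforce
    qed
    then show ?thesis
      using \<kappa> M(1) colourings_restrict[OF \<kappa>, of W] by (auto simp: colourings_def)
  qed
  have upd_in: "\<kappa>(v := q) \<in> colourings N adj (insert v W)"
    if \<kappa>: "\<kappa> \<in> colourings N adj W" and q: "q \<in> {1..N}" "q \<notin> \<kappa> ` M" for \<kappa> q
  proof -
    have "(\<kappa>(v := q)) x \<noteq> (\<kappa>(v := q)) y" if "x \<in> insert v W" "y \<in> insert v W" "adj x y" for x y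
      using that \<kappa> q v irrefl M by (auto simp: colourings_def)
    moreover have "\<kappa>(v := q) \<in> insert v W \<rightarrow>\<^sub>E {1..N}"
      using \<kappa> q by (intro PiE_fun_upd) (auto simp: colourings_def)
    ultimately show ?thesis unfolding colourings_def by blast
  qed
  show ?thesis
  proof (rule bij_betw_byWitness[where f'="\<lambda>(\<kappa>, q). \<kappa>(v := q)"])
    show "\<forall>\<kappa>\<in>colourings N adj (insert v W). (\<lambda>(\<kappa>, q). \<kappa>(v := q)) (restrict \<kappa> W, \<kappa> v) = \<kappa>"
      by (auto simp: colourings_def PiE_iff extensional_def fun_eq_iff)
    show "\<forall>p\<in>SIGMA \<kappa>:colourings N adj W. {1..N} - \<kappa> ` M.
            (\<lambda>\<kappa>. (restrict \<kappa> W, \<kappa> v)) ((\<lambda>(\<kappa>, q). \<kappa>(v := q)) p) = p"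
      using v by (auto simp: colourings_def PiE_iff extensional_def fun_eq_iff)
    show "(\<lambda>\<kappa>. (restrict \<kappa> W, \<kappa> v)) ` colourings N adj (insert v W)
        \<subseteq> (SIGMA \<kappa>:colourings N adj W. {1..N} - \<kappa> ` M)"
      using restrict_in by blast
    show "(\<lambda>(\<kappa>, q). \<kappa>(v := q)) ` (SIGMA \<kappa>:colourings N adj W. {1..N} - \<kappa> ` M)
        \<subseteq> colourings N adj (insert v W)"
      using upd_in by auto
  qed
qed

lemma sum_colourings_insert:
  assumes "finite W" "v \<notin> W" "\<not> adj v v"
    and "M \<subseteq> W" "\<And>u. u \<in> W \<Longrightarrow> (adj u v \<or> adj v u) \<longleftrightarrow> u \<in> M"
  shows "(\<Sum>\<kappa>\<in>colourings N adj (insert v W). cweight (insert v W) \<kappa> * F (restrict \<kappa> W) (\<kappa> v))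
       = (\<Sum>\<kappa>\<in>colourings N adj W. cweight W \<kappa> * (\<Sum>q\<in>{1..N} - \<kappa> ` M. xvar q * F \<kappa> q))"
proof -
  let ?g = "\<lambda>(\<kappa>, q). cweight W \<kappa> * (xvar q * F \<kappa> q)"
  have "cweight (insert v W) \<kappa> = cweight W (restrict \<kappa> W) * xvar (\<kappa> v)" for \<kappa>
    using assms(1,2) by (simp add: cweight_def mult.commute)
  then have "(\<Sum>\<kappa>\<in>colourings N adj (insert v W). cweight (insert v W) \<kappa> * F (restrict \<kappa> W) (\<kappa> v))
      = (\<Sum>\<kappa>\<in>colourings N adj (insert v W). ?g (restrict \<kappa> W, \<kappa> v))"
    by (simp only: case_prod_conv mult.assoc)
  also have "\<dots> = (\<Sum>p\<in>(SIGMA \<kappa>:colourings N adj W. {1..N} - \<kappa> ` M). ?g p)"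
    by (rule sum.reindex_bij_betw[OF bij_betw_colourings_insert[OF assms(2-5)]])
  also have "\<dots> = (\<Sum>\<kappa>\<in>colourings N adj W. \<Sum>q\<in>{1..N} - \<kappa> ` M. cweight W \<kappa> * (xvar q * F \<kappa> q))"
    by (rule sum.Sigma[symmetric]) (simp_all add: finite_colourings assms(1))
  finally show ?thesis by (simp add: sum_distrib_left)
qed

lemma sum_walk_Suc:
  "(\<Sum>c\<in>{1..N}. walk N k s c * (\<Sum>q\<in>{1..N} - {c}. xvar q * \<Phi> q))
     = (\<Sum>q\<in>{1..N}. walk N (Suc k) s q * \<Phi> q)"
proof -
  have "(\<Sum>c\<in>{1..N}. walk N k s c * (\<Sum>q\<in>{1..N} - {c}. xvar q * \<Phi> q))
      = (\<Sum>c\<in>{1..N}. \<Sum>q\<in>{q \<in> {1..N}. q \<noteq> c}. walk N k s c * (xvar q * \<Phi> q))"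
    by (simp add: sum_distrib_left set_diff_eq)
  also have "\<dots> = (\<Sum>q\<in>{1..N}. \<Sum>c\<in>{c \<in> {1..N}. q \<noteq> c}. walk N k s c * (xvar q * \<Phi> q))"
    by (rule sum.swap_restrict) simp_all
  also have "\<dots> = (\<Sum>q\<in>{1..N}. (\<Sum>c\<in>{1..N} - {q}. walk N k s c) * (xvar q * \<Phi> q))"
  proof (intro sum.cong refl)
    fix q :: nat
    have "{c \<in> {1..N}. q \<noteq> c} = {1..N} - {q}" by auto
    then show "(\<Sum>c\<in>{c \<in> {1..N}. q \<noteq> c}. walk N k s c * (xvar q * \<Phi> q))
        = (\<Sum>c\<in>{1..N} - {q}. walk N k s c) * (xvar q * \<Phi> q)"
      by (simp add: sum_distrib_right)
  qed
  also have "\<dots> = (\<Sum>q\<in>{1..N}. walk N (Suc k) s q * \<Phi> q)"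
    by (simp add: mult_ac)
  finally show ?thesis .
qed

lemma insert_image_Suc:
  assumes "inj_on u {1..Suc k}" "u ` {1..Suc k} \<inter> B = {}"
  shows "B \<union> u ` {1..Suc k} = insert (u (Suc k)) (B \<union> u ` {1..k})"
    and "u (Suc k) \<notin> B \<union> u ` {1..k}"
    and "inj_on u {1..k}" "u ` {1..k} \<inter> B = {}"
proof -
  show "B \<union> u ` {1..Suc k} = insert (u (Suc k)) (B \<union> u ` {1..k})"
    by (auto simp: atLeastAtMostSuc_conv)
  show "inj_on u {1..k}" using assms(1) by (rule inj_on_subset) auto
  show "u ` {1..k} \<inter> B = {}" using assms(2) by (auto simp: disjoint_iff)
  have "u (Suc k) \<notin> u ` {1..k}"
  proof
    assume "u (Suc k) \<in> u ` {1..k}"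
    then obtain j where "j \<in> {1..k}" "u (Suc k) = u j" by auto
    then show False using inj_onD[OF assms(1), of "Suc k" j] by auto
  qed
  moreover have "u (Suc k) \<notin> B"
  proof
    assume "u (Suc k) \<in> B"
    then have "u (Suc k) \<in> u ` {1..Suc k} \<inter> B" by simp
    then show False by (simp only: assms(2) empty_iff)
  qed
  ultimately show "u (Suc k) \<notin> B \<union> u ` {1..k}" by simp
qed

lemma sum_colourings_path:
  assumes "finite B" "u 0 \<in> B" "inj_on u {1..k}" "u ` {1..k} \<inter> B = {}"
    and "\<And>i w. 1 \<le> i \<Longrightarrow> i \<le> k \<Longrightarrow> w \<in> B \<union> u ` {1..<i} \<Longrightarrow>
           (adj w (u i) \<or> adj (u i) w) \<longleftrightarrow> w = u (i - 1)"
    and "\<And>i. 1 \<le> i \<Longrightarrow> i \<le> k \<Longrightarrow> \<not> adj (u i) (u i)"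
  shows "(\<Sum>\<kappa>\<in>colourings N adj (B \<union> u ` {1..k}). cweight (B \<union> u ` {1..k}) \<kappa> * \<Phi> (\<kappa> (u k)))
       = (\<Sum>\<kappa>\<in>colourings N adj B. cweight B \<kappa> * (\<Sum>q\<in>{1..N}. walk N k (\<kappa> (u 0)) q * \<Phi> q))"
  using assms
proof (induction k arbitrary: \<Phi>)
  case 0
  have "(\<Sum>q\<in>{1..N}. walk N 0 (\<kappa> (u 0)) q * \<Phi> q) = \<Phi> (\<kappa> (u 0))"
    if "\<kappa> \<in> colourings N adj B" for \<kappa>
  proof -
    have "\<kappa> (u 0) \<in> {1..N}" using that 0 by (auto simp: colourings_def)
    then show ?thesis by (simp add: if_distrib[where f="\<lambda>x. x * \<Phi> _"] sum.delta cong: if_cong)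
  qed
  then show ?case by simp
next
  case (Suc k)
  let ?W = "B \<union> u ` {1..k}"
  note new = insert_image_Suc[OF Suc.prems(3,4)]
  have "(\<Sum>\<kappa>\<in>colourings N adj (B \<union> u ` {1..Suc k}). cweight (B \<union> u ` {1..Suc k}) \<kappa> * \<Phi> (\<kappa> (u (Suc k))))
      = (\<Sum>\<kappa>\<in>colourings N adj ?W. cweight ?W \<kappa> * (\<Sum>q\<in>{1..N} - \<kappa> ` {u k}. xvar q * \<Phi> q))"
    unfolding new(1)
  proof (rule sum_colourings_insert[where F="\<lambda>_ q. \<Phi> q"])
    show "{u k} \<subseteq> ?W" using Suc.prems(2) by (cases k) auto
    show "(adj w (u (Suc k)) \<or> adj (u (Suc k)) w) \<longleftrightarrow> w \<in> {u k}" if "w \<in> ?W" for w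
      using Suc.prems(5)[of "Suc k" w] that by (simp add: atLeastLessThanSuc_atLeastAtMost)
  qed (use Suc.prems(1,6) new(2) in auto)
  also have "\<dots> = (\<Sum>\<kappa>\<in>colourings N adj ?W.
      cweight ?W \<kappa> * (\<lambda>c. \<Sum>q\<in>{1..N} - {c}. xvar q * \<Phi> q) (\<kappa> (u k)))"
    by simp
  also have "\<dots> = (\<Sum>\<kappa>\<in>colourings N adj B. cweight B \<kappa> *
      (\<Sum>c\<in>{1..N}. walk N k (\<kappa> (u 0)) c * (\<Sum>q\<in>{1..N} - {c}. xvar q * \<Phi> q)))"
  proof (rule Suc.IH)
    show "(adj w (u i) \<or> adj (u i) w) \<longleftrightarrow> w = u (i - 1)"
      if "1 \<le> i" "i \<le> k" "w \<in> B \<union> u ` {1..<i}" for i w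
      using Suc.prems(5) that by simp
  qed (use Suc.prems(1,2,6) new(3,4) in auto)
  finally show ?case by (simp only: sum_walk_Suc)
qed

text \<open>\<open>distinct_colour_sum N k S G\<close> is the sum of \<open>x_q1 * ... * x_qk * G (S \<union> {q1, ..., qk})\<close> over
  all sequences of distinct colours \<open>qi \<in> {1..N} - S\<close>: it accounts for \<open>k\<close> further clique
  vertices whose neighbours already use the colours in \<open>S\<close>.\<close>

fun distinct_colour_sum :: "nat \<Rightarrow> nat \<Rightarrow> nat set \<Rightarrow> (nat set \<Rightarrow> xpoly) \<Rightarrow> xpoly" where
  "distinct_colour_sum N 0 S G = G S"
| "distinct_colour_sum N (Suc k) S G =
     distinct_colour_sum N k S (\<lambda>S'. \<Sum>q\<in>{1..N} - S'. xvar q * G (insert q S'))"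

lemma distinct_colour_sum_Suc:
  "distinct_colour_sum N (Suc k) S G = (\<Sum>q\<in>{1..N} - S. xvar q * distinct_colour_sum N k (insert q S) G)"
proof (induction k arbitrary: S G)
  case (Suc k)
  have "distinct_colour_sum N (Suc (Suc k)) S G
      = distinct_colour_sum N (Suc k) S (\<lambda>S'. \<Sum>q\<in>{1..N} - S'. xvar q * G (insert q S'))"
    by simp
  also have "\<dots> = (\<Sum>q\<in>{1..N} - S. xvar q *
      distinct_colour_sum N k (insert q S) (\<lambda>S'. \<Sum>q\<in>{1..N} - S'. xvar q * G (insert q S')))"
    by (rule Suc.IH)
  also have "\<dots> = (\<Sum>q\<in>{1..N} - S. xvar q * distinct_colour_sum N (Suc k) (insert q S) G)"
    by simp
  finally show ?case .
qed simp

lemma distinct_colour_sum_const: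
  assumes "S \<subseteq> {1..N}"
  shows "distinct_colour_sum N k S (\<lambda>_. 1) = of_nat (fact k) * elem_fps ({1..N} - S) $ k"
  using assms
proof (induction k arbitrary: S)
  case 0
  then show ?case by (simp add: elem_fps_nth_0)
next
  case (Suc k)
  have "distinct_colour_sum N (Suc k) S (\<lambda>_. 1)
      = (\<Sum>q\<in>{1..N} - S. xvar q * distinct_colour_sum N k (insert q S) (\<lambda>_. 1))"
    by (rule distinct_colour_sum_Suc)
  also have "\<dots> = (\<Sum>q\<in>{1..N} - S. xvar q * (of_nat (fact k) * elem_fps ({1..N} - S - {q}) $ k))"
  proof (intro sum.cong refl)
    fix q assume "q \<in> {1..N} - S"
    moreover have "{1..N} - insert q S = {1..N} - S - {q}" by auto
    ultimately show "xvar q * distinct_colour_sum N k (insert q S) (\<lambda>_. 1)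
        = xvar q * (of_nat (fact k) * elem_fps ({1..N} - S - {q}) $ k)"
      using Suc by simp
  qed
  also have "\<dots> = of_nat (fact k) * (\<Sum>q\<in>{1..N} - S. xvar q * elem_fps ({1..N} - S - {q}) $ k)"
    by (simp add: sum_distrib_left mult_ac)
  also have "\<dots> = of_nat (fact (Suc k)) * elem_fps ({1..N} - S) $ Suc k"
    by (simp add: sum_xvar_elem_fps_remove algebra_simps)
  finally show ?case .
qed

lemma sum_colourings_clique:
  assumes "finite B" "A \<subseteq> B" "inj_on w {1..k}" "w ` {1..k} \<inter> B = {}"
    and "\<And>i y. 1 \<le> i \<Longrightarrow> i \<le> k \<Longrightarrow> y \<in> B \<union> w ` {1..<i} \<Longrightarrow>
           (adj y (w i) \<or> adj (w i) y) \<longleftrightarrow> y \<in> A \<union> w ` {1..<i}"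
    and "\<And>i. 1 \<le> i \<Longrightarrow> i \<le> k \<Longrightarrow> \<not> adj (w i) (w i)"
  shows "(\<Sum>\<kappa>\<in>colourings N adj (B \<union> w ` {1..k}).
            cweight (B \<union> w ` {1..k}) \<kappa> * F (restrict \<kappa> B) * G (\<kappa> ` (A \<union> w ` {1..k})))
       = (\<Sum>\<kappa>\<in>colourings N adj B. cweight B \<kappa> * F \<kappa> * distinct_colour_sum N k (\<kappa> ` A) G)"
  using assms
proof (induction k arbitrary: G)
  case 0
  have "restrict \<kappa> B = \<kappa>" if "\<kappa> \<in> colourings N adj B" for \<kappa>
  proof -
    from that have "\<kappa> \<in> B \<rightarrow>\<^sub>E {1..N}" by (simp add: colourings_def)
    then show ?thesis by simp
  qed
  then show ?case by simp
next
  case (Suc k)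
  let ?W = "B \<union> w ` {1..k}" and ?M = "A \<union> w ` {1..k}"
  note new = insert_image_Suc[OF Suc.prems(3,4)]
  have MW: "?M \<subseteq> ?W" using Suc.prems(2) by auto
  have M_Suc: "A \<union> w ` {1..Suc k} = insert (w (Suc k)) ?M"
    by (auto simp: atLeastAtMostSuc_conv)
  have "(\<Sum>\<kappa>\<in>colourings N adj (B \<union> w ` {1..Suc k}).
        cweight (B \<union> w ` {1..Suc k}) \<kappa> * F (restrict \<kappa> B) * G (\<kappa> ` (A \<union> w ` {1..Suc k})))
      = (\<Sum>\<kappa>\<in>colourings N adj (insert (w (Suc k)) ?W). cweight (insert (w (Suc k)) ?W) \<kappa> *
          (\<lambda>\<kappa>' q. F (restrict \<kappa>' B) * G (insert q (\<kappa>' ` ?M))) (restrict \<kappa> ?W) (\<kappa> (w (Suc k))))"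
    unfolding new(1) M_Suc
  proof (intro sum.cong refl)
    fix \<kappa> :: "_ \<Rightarrow> nat"
    have "restrict \<kappa> ?W ` ?M = \<kappa> ` ?M" using MW by auto
    then show "cweight (insert (w (Suc k)) ?W) \<kappa> * F (restrict \<kappa> B) * G (\<kappa> ` insert (w (Suc k)) ?M)
        = cweight (insert (w (Suc k)) ?W) \<kappa> *
          (\<lambda>\<kappa>' q. F (restrict \<kappa>' B) * G (insert q (\<kappa>' ` ?M))) (restrict \<kappa> ?W) (\<kappa> (w (Suc k)))"
      by (simp add: restrict_restrict Int_absorb1 mult.assoc)
  qed
  also have "\<dots> = (\<Sum>\<kappa>\<in>colourings N adj ?W. cweight ?W \<kappa> *
      (\<Sum>q\<in>{1..N} - \<kappa> ` ?M. xvar q * (F (restrict \<kappa> B) * G (insert q (\<kappa> ` ?M)))))"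
  proof (rule sum_colourings_insert)
    show "(adj y (w (Suc k)) \<or> adj (w (Suc k)) y) \<longleftrightarrow> y \<in> ?M" if "y \<in> ?W" for y
      using Suc.prems(5)[of "Suc k" y] that by (simp add: atLeastLessThanSuc_atLeastAtMost)
  qed (use Suc.prems(1,6) new(2) MW in simp_all)
  also have "\<dots> = (\<Sum>\<kappa>\<in>colourings N adj ?W. cweight ?W \<kappa> * F (restrict \<kappa> B) *
      (\<lambda>S. \<Sum>q\<in>{1..N} - S. xvar q * G (insert q S)) (\<kappa> ` ?M))"
    by (simp add: sum_distrib_left mult_ac)
  also have "\<dots> = (\<Sum>\<kappa>\<in>colourings N adj B. cweight B \<kappa> * F \<kappa> * distinct_colour_sum N (Suc k) (\<kappa> ` A) G)"
    unfolding distinct_colour_sum.simps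
  proof (rule Suc.IH)
    show "(adj y (w i) \<or> adj (w i) y) \<longleftrightarrow> y \<in> A \<union> w ` {1..<i}"
      if "1 \<le> i" "i \<le> k" "y \<in> B \<union> w ` {1..<i}" for i y
      using Suc.prems(5) that by simp
  qed (use Suc.prems(1,2,6) new(3,4) in simp_all)
  finally show ?case .
qed

lemma sum_colourings_singleton:
  assumes "\<not> adj v v"
  shows "(\<Sum>\<kappa>\<in>colourings N adj {v}. cweight {v} \<kappa> * \<Phi> (\<kappa> v)) = (\<Sum>q\<in>{1..N}. xvar q * \<Phi> q)"
proof -
  have "(\<Sum>\<kappa>\<in>colourings N adj (insert v {}). cweight (insert v {}) \<kappa> * (\<lambda>_ q. \<Phi> q) (restrict \<kappa> {}) (\<kappa> v))
     = (\<Sum>\<kappa>\<in>colourings N adj {}. cweight {} \<kappa> * (\<Sum>q\<in>{1..N} - \<kappa> ` {}. xvar q * \<Phi> q))"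
    by (rule sum_colourings_insert) (use assms in simp_all)
  moreover have "colourings N adj {} = {\<lambda>_. undefined}" by (simp add: colourings_def)
  ultimately show ?thesis by (simp add: cweight_def)
qed

lemma sum_colourings_image:
  assumes inj: "inj_on f W" and adj: "\<And>a b. a \<in> W \<Longrightarrow> b \<in> W \<Longrightarrow> adj' (f a) (f b) \<longleftrightarrow> adj a b"
    and r: "r \<in> W"
  shows "(\<Sum>\<kappa>\<in>colourings N adj' (f ` W). cweight (f ` W) \<kappa> * \<Psi> (\<kappa> (f r)))
       = (\<Sum>\<kappa>\<in>colourings N adj W. cweight W \<kappa> * \<Psi> (\<kappa> r))"
proof (rule sum.reindex_bij_witness[where i="\<lambda>\<kappa> x. if x \<in> f ` W then \<kappa> (the_inv_into W f x) else undefined"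
      and j="\<lambda>\<kappa>. restrict (\<kappa> \<circ> f) W"])
  have inv: "the_inv_into W f (f y) = y" if "y \<in> W" for y using the_inv_into_f_f[OF inj that] .
  fix \<kappa> assume \<kappa>: "\<kappa> \<in> colourings N adj' (f ` W)"
  then show "(\<lambda>x. if x \<in> f ` W then restrict (\<kappa> \<circ> f) W (the_inv_into W f x) else undefined) = \<kappa>"
    using inv by (auto simp: colourings_def PiE_iff extensional_def fun_eq_iff)
  show "restrict (\<kappa> \<circ> f) W \<in> colourings N adj W"
    using \<kappa> adj unfolding colourings_def by (auto simp: PiE_iff)
  have "cweight (f ` W) \<kappa> = cweight W (restrict (\<kappa> \<circ> f) W)"
    unfolding cweight_def using inj by (simp add: prod.reindex)
  then show "cweight W (restrict (\<kappa> \<circ> f) W) * \<Psi> (restrict (\<kappa> \<circ> f) W r) = cweight (f ` W) \<kappa> * \<Psi> (\<kappa> (f r))"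
    using r by simp
next
  have inv: "the_inv_into W f (f y) = y" if "y \<in> W" for y using the_inv_into_f_f[OF inj that] .
  fix \<kappa> assume \<kappa>: "\<kappa> \<in> colourings N adj W"
  then show "restrict ((\<lambda>x. if x \<in> f ` W then \<kappa> (the_inv_into W f x) else undefined) \<circ> f) W = \<kappa>"
    using inv by (auto simp: colourings_def PiE_iff extensional_def fun_eq_iff)
  show "(\<lambda>x. if x \<in> f ` W then \<kappa> (the_inv_into W f x) else undefined) \<in> colourings N adj' (f ` W)"
    using \<kappa> adj inv unfolding colourings_def by (auto simp: PiE_iff extensional_def)
qed

definition set_monomial :: "'v set \<Rightarrow> ('v \<Rightarrow>\<^sub>0 nat)" where
  "set_monomial S = (\<Sum>v\<in>S. Poly_Mapping.single v 1)"

lemma lookup_set_monomial: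
  "finite S \<Longrightarrow> Poly_Mapping.lookup (set_monomial S) i = (if i \<in> S then 1 else 0)"
  unfolding set_monomial_def by (simp add: lookup_sum lookup_single when_def)

lemma keys_set_monomial: "finite S \<Longrightarrow> Poly_Mapping.keys (set_monomial S) = S"
  by (auto simp: in_keys_iff lookup_set_monomial split: if_splits)

lemma set_monomial_keys:
  assumes "\<forall>i. Poly_Mapping.lookup \<beta> i \<le> 1"
  shows "set_monomial (Poly_Mapping.keys \<beta>) = \<beta>"
proof (rule poly_mapping_eqI)
  fix i
  show "Poly_Mapping.lookup (set_monomial (Poly_Mapping.keys \<beta>)) i = Poly_Mapping.lookup \<beta> i"
    using assms[rule_format, of i] by (auto simp: lookup_set_monomial in_keys_iff)
qed

lemma prod_xvar: "finite S \<Longrightarrow> prod xvar S = Poly_Mapping.single (set_monomial S) 1"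
  by (induction S rule: finite_induct) (simp_all add: set_monomial_def xvar_def mult_single)

lemma cweight_single:
  "finite W \<Longrightarrow> cweight W \<kappa> = Poly_Mapping.single (\<Sum>v\<in>W. Poly_Mapping.single (\<kappa> v) 1) 1"
  by (induction W rule: finite_induct) (simp_all add: cweight_def xvar_def mult_single)

lemma elem_sf_iff_set_monomial:
  assumes keys: "\<forall>i\<in>Poly_Mapping.keys \<beta>. i \<le> N"
  shows "elem_sf k \<beta> = (if \<exists>S. S \<subseteq> {1..N} \<and> card S = k \<and> set_monomial S = \<beta> then 1 else 0)"
proof -
  have "(Poly_Mapping.lookup \<beta> 0 = 0 \<and> (\<forall>i. Poly_Mapping.lookup \<beta> i \<le> 1)
        \<and> sum (Poly_Mapping.lookup \<beta>) (Poly_Mapping.keys \<beta>) = k)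
      \<longleftrightarrow> (\<exists>S. S \<subseteq> {1..N} \<and> card S = k \<and> set_monomial S = \<beta>)"
  proof
    assume cond: "Poly_Mapping.lookup \<beta> 0 = 0 \<and> (\<forall>i. Poly_Mapping.lookup \<beta> i \<le> 1)
        \<and> sum (Poly_Mapping.lookup \<beta>) (Poly_Mapping.keys \<beta>) = k"
    then have one: "Poly_Mapping.lookup \<beta> i = 1" if "i \<in> Poly_Mapping.keys \<beta>" for i
      using that by (metis in_keys_iff le_antisym less_one not_le)
    have "0 \<notin> Poly_Mapping.keys \<beta>" using cond by (simp add: in_keys_iff)
    have "i \<in> {1..N}" if "i \<in> Poly_Mapping.keys \<beta>" for i
      using that keys \<open>0 \<notin> Poly_Mapping.keys \<beta>\<close> by (cases i) auto
    then have "Poly_Mapping.keys \<beta> \<subseteq> {1..N}" by blast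
    moreover have "card (Poly_Mapping.keys \<beta>) = k"
      using cond one by simp
    ultimately show "\<exists>S. S \<subseteq> {1..N} \<and> card S = k \<and> set_monomial S = \<beta>"
      using cond set_monomial_keys by blast
  next
    assume "\<exists>S. S \<subseteq> {1..N} \<and> card S = k \<and> set_monomial S = \<beta>"
    then obtain S where S: "S \<subseteq> {1..N}" "card S = k" "set_monomial S = \<beta>" by blast
    then have "finite S" by (meson finite_atLeastAtMost finite_subset)
    then show "Poly_Mapping.lookup \<beta> 0 = 0 \<and> (\<forall>i. Poly_Mapping.lookup \<beta> i \<le> 1)
        \<and> sum (Poly_Mapping.lookup \<beta>) (Poly_Mapping.keys \<beta>) = k"
      using S by (auto simp: lookup_set_monomial keys_set_monomial)
  qed
  then show ?thesis by (simp add: elem_sf_def)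
qed

lemma elem_sf_eq_lookup:
  assumes "\<forall>i\<in>Poly_Mapping.keys \<beta>. i \<le> N"
  shows "elem_sf k \<beta> = Poly_Mapping.lookup (elem_fps {1..N} $ k) \<beta>"
proof -
  let ?A = "{S. S \<subseteq> {1..N} \<and> card S = k}"
  let ?B = "{S \<in> ?A. set_monomial S = \<beta>}"
  have fin: "finite S" if "S \<subseteq> {1..N}" for S
    by (rule finite_subset[OF that finite_atLeastAtMost])
  have "finite ?A" by (rule finite_subset[of _ "Pow {1..N}"]) auto
  then have "Poly_Mapping.lookup (elem_fps {1..N} $ k) \<beta> = of_nat (card ?B)"
    unfolding elem_fps_nth[OF finite_atLeastAtMost] lookup_sum
    by (simp add: sum.inter_filter[symmetric] prod_xvar fin lookup_single when_def)
  moreover have "?B \<subseteq> {Poly_Mapping.keys \<beta>}"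
  proof
    fix S assume "S \<in> ?B"
    then show "S \<in> {Poly_Mapping.keys \<beta>}" using keys_set_monomial[OF fin[of S]] by simp
  qed
  then have "?B = {} \<or> ?B = {Poly_Mapping.keys \<beta>}" by (rule subset_singletonD)
  ultimately show ?thesis
    using elem_sf_iff_set_monomial[OF assms, of k] by auto
qed

lemma csf_eq_lookup:
  assumes fin: "finite W" and keys: "\<forall>i\<in>Poly_Mapping.keys \<alpha>. i \<le> N"
  shows "csf (W, adj) \<alpha> = Poly_Mapping.lookup (\<Sum>\<kappa>\<in>colourings N adj W. cweight W \<kappa>) \<alpha>"
proof -
  let ?mono = "\<lambda>\<kappa>. \<Sum>v\<in>W. Poly_Mapping.single (\<kappa> v) (1::nat)"
  have mono_eq: "?mono \<kappa> = \<alpha> \<longleftrightarrow> (\<forall>i. card {v\<in>W. \<kappa> v = i} = Poly_Mapping.lookup \<alpha> i)" for \<kappa>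
    using fin by (simp add: poly_mapping_eq_iff fun_eq_iff lookup_sum lookup_single when_def
        sum.If_cases Int_def conj_commute)
  have "{\<kappa>. proper_coloring (W, adj) \<kappa> \<and> (\<forall>i. card {v\<in>W. \<kappa> v = i} = Poly_Mapping.lookup \<alpha> i)}
      = {\<kappa>\<in>colourings N adj W. ?mono \<kappa> = \<alpha>}"
  proof (intro set_eqI iffI)
    fix \<kappa> assume \<kappa>: "\<kappa> \<in> {\<kappa>. proper_coloring (W, adj) \<kappa> \<and> (\<forall>i. card {v\<in>W. \<kappa> v = i} = Poly_Mapping.lookup \<alpha> i)}"
    have "\<kappa> v \<le> N" if "v \<in> W" for v
    proof -
      have "card {u\<in>W. \<kappa> u = \<kappa> v} \<noteq> 0" using that fin by auto
      then have "\<kappa> v \<in> Poly_Mapping.keys \<alpha>" using \<kappa> by (simp add: in_keys_iff)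
      then show ?thesis using keys by auto
    qed
    then show "\<kappa> \<in> {\<kappa>\<in>colourings N adj W. ?mono \<kappa> = \<alpha>}"
      using \<kappa> mono_eq unfolding proper_coloring_def colourings_def by (auto simp: PiE_iff)
  next
    fix \<kappa> assume "\<kappa> \<in> {\<kappa>\<in>colourings N adj W. ?mono \<kappa> = \<alpha>}"
    then show "\<kappa> \<in> {\<kappa>. proper_coloring (W, adj) \<kappa> \<and> (\<forall>i. card {v\<in>W. \<kappa> v = i} = Poly_Mapping.lookup \<alpha> i)}"
      using mono_eq unfolding proper_coloring_def colourings_def by (auto simp: PiE_iff)
  qed
  moreover have "Poly_Mapping.lookup (\<Sum>\<kappa>\<in>colourings N adj W. cweight W \<kappa>) \<alpha>
      = of_nat (card {\<kappa>\<in>colourings N adj W. ?mono \<kappa> = \<alpha>})"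
    using fin finite_colourings[OF fin]
    by (simp add: lookup_sum cweight_single lookup_single when_def sum.inter_filter[symmetric])
  ultimately show ?thesis by (simp add: csf_def)
qed

lemma finite_add_decompositions: "finite {(\<beta>::'a \<Rightarrow>\<^sub>0 nat, \<gamma>). \<beta> + \<gamma> = \<alpha>}"
proof -
  let ?L = "{\<beta>::'a \<Rightarrow>\<^sub>0 nat. \<forall>i. Poly_Mapping.lookup \<beta> i \<le> Poly_Mapping.lookup \<alpha> i}"
  let ?r = "\<lambda>\<beta>. restrict (Poly_Mapping.lookup \<beta>) (Poly_Mapping.keys \<alpha>)"
  have "inj_on ?r ?L"
  proof (rule inj_onI)
    fix \<beta> \<beta>' assume L: "\<beta> \<in> ?L" "\<beta>' \<in> ?L" and r: "?r \<beta> = ?r \<beta>'"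
    have "Poly_Mapping.lookup \<beta> i = Poly_Mapping.lookup \<beta>' i" for i
    proof (cases "i \<in> Poly_Mapping.keys \<alpha>")
      case True
      then show ?thesis using fun_cong[OF r, of i] by simp
    next
      case False
      then have "Poly_Mapping.lookup \<alpha> i = 0" by (simp add: in_keys_iff)
      then show ?thesis using L by (metis le_zero_eq mem_Collect_eq)
    qed
    then show "\<beta> = \<beta>'" by (rule poly_mapping_eqI)
  qed
  moreover have "?r ` ?L \<subseteq> Poly_Mapping.keys \<alpha> \<rightarrow>\<^sub>E {0..Max (Poly_Mapping.range \<alpha>)}"
  proof (rule image_subsetI)
    fix \<beta> assume \<beta>: "\<beta> \<in> ?L"
    have "Poly_Mapping.lookup \<beta> i \<le> Max (Poly_Mapping.range \<alpha>)" if i: "i \<in> Poly_Mapping.keys \<alpha>" for i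
    proof -
      have "Poly_Mapping.lookup \<alpha> i \<in> Poly_Mapping.range \<alpha>"
        using i by (simp add: Poly_Mapping.range.rep_eq in_keys_iff)
      then have "Poly_Mapping.lookup \<alpha> i \<le> Max (Poly_Mapping.range \<alpha>)" by simp
      moreover have "Poly_Mapping.lookup \<beta> i \<le> Poly_Mapping.lookup \<alpha> i" using \<beta> by simp
      ultimately show ?thesis by (rule order_trans[rotated])
    qed
    then show "?r \<beta> \<in> Poly_Mapping.keys \<alpha> \<rightarrow>\<^sub>E {0..Max (Poly_Mapping.range \<alpha>)}"
      by (simp add: restrict_PiE_iff)
  qed
  ultimately have "finite ?L"
    by (metis (no_types, lifting) finite_PiE finite_atLeastAtMost finite_imageD finite_keys finite_subset)
  moreover have "{(\<beta>, \<gamma>). \<beta> + \<gamma> = \<alpha>} \<subseteq> ?L \<times> ?L"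
    by (auto simp: lookup_add)
  ultimately show ?thesis by (meson finite_SigmaI finite_subset)
qed

lemma sf_mult_lookup:
  "sf_mult (Poly_Mapping.lookup P) (Poly_Mapping.lookup Q) \<alpha> = Poly_Mapping.lookup (P * Q :: xpoly) \<alpha>"
proof -
  let ?D = "{(\<beta>::nat \<Rightarrow>\<^sub>0 nat, \<gamma>). \<beta> + \<gamma> = \<alpha>}"
  have "Sum_any (\<lambda>q. Poly_Mapping.lookup Q q when \<alpha> = l + q)
      = (Poly_Mapping.lookup Q (\<alpha> - l) when \<alpha> = l + (\<alpha> - l))" for l
  proof -
    have "(\<lambda>q. Poly_Mapping.lookup Q q when \<alpha> = l + q)
        = (\<lambda>q. if q = \<alpha> - l then (Poly_Mapping.lookup Q q when \<alpha> = l + q) else 0)"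
      by (rule ext) (auto simp: when_def)
    then show ?thesis by (simp only: Sum_any.delta)
  qed
  then have "Poly_Mapping.lookup (P * Q) \<alpha>
      = Sum_any (\<lambda>l. Poly_Mapping.lookup P l * (Poly_Mapping.lookup Q (\<alpha> - l) when \<alpha> = l + (\<alpha> - l)))"
    by (simp add: lookup_mult)
  also have "\<dots> = (\<Sum>l\<in>fst ` ?D. Poly_Mapping.lookup P l * (Poly_Mapping.lookup Q (\<alpha> - l) when \<alpha> = l + (\<alpha> - l)))"
  proof (rule Sum_any.expand_superset)
    show "finite (fst ` ?D)" using finite_add_decompositions by blast
    show "{l. Poly_Mapping.lookup P l * (Poly_Mapping.lookup Q (\<alpha> - l) when \<alpha> = l + (\<alpha> - l)) \<noteq> 0} \<subseteq> fst ` ?D"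
    proof
      fix l assume "l \<in> {l. Poly_Mapping.lookup P l * (Poly_Mapping.lookup Q (\<alpha> - l) when \<alpha> = l + (\<alpha> - l)) \<noteq> 0}"
      then have "(l, \<alpha> - l) \<in> ?D" by (auto simp: when_def split: if_splits)
      then show "l \<in> fst ` ?D" by force
    qed
  qed
  also have "\<dots> = sf_mult (Poly_Mapping.lookup P) (Poly_Mapping.lookup Q) \<alpha>"
    unfolding sf_mult_def
    by (rule sum.reindex_bij_witness[where i=fst and j="\<lambda>l. (l, \<alpha> - l)"]) (auto simp: when_def)
  finally show ?thesis by simp
qed

definition csf_poly :: "nat \<Rightarrow> 'v graph \<Rightarrow> xpoly" where
  "csf_poly N G = (\<Sum>\<kappa>\<in>colourings N (snd G) (fst G). cweight (fst G) \<kappa>)"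

lemma csf_eq_lookup_csf_poly:
  "finite (fst G) \<Longrightarrow> \<forall>i\<in>Poly_Mapping.keys \<alpha>. i \<le> N \<Longrightarrow> csf G \<alpha> = Poly_Mapping.lookup (csf_poly N G) \<alpha>"
  using csf_eq_lookup[of "fst G" \<alpha> N "snd G"] by (simp add: csf_poly_def)

lemma tailed_adj:
  "snd (tailed (V, E) r k) a b \<longleftrightarrow>
     (\<exists>u v. a = Inl u \<and> b = Inl v \<and> u \<in> V \<and> v \<in> V \<and> (E u v \<or> E v u)) \<or>
     (\<exists>i<k. (a = tail_vertex r i \<and> b = tail_vertex r (i+1)) \<or> (b = tail_vertex r i \<and> a = tail_vertex r (i+1)))"
  unfolding tailed_def mk_graph_def by auto

lemma tailed_adj_Inr:
  assumes "1 \<le> i"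
  shows "(snd (tailed (V, E) r k) w (Inr i) \<or> snd (tailed (V, E) r k) (Inr i) w) \<longleftrightarrow>
    (i \<le> k \<and> w = tail_vertex r (i - 1)) \<or> (i < k \<and> w = Inr (i + 1))"
proof -
  have "Inr i = tail_vertex r j \<longleftrightarrow> j = i" for j
    using assms by (auto simp: tail_vertex_def)
  then have "(snd (tailed (V, E) r k) w (Inr i) \<or> snd (tailed (V, E) r k) (Inr i) w) \<longleftrightarrow>
      (\<exists>j<k. (w = tail_vertex r j \<and> j + 1 = i) \<or> (j = i \<and> w = tail_vertex r (j + 1)))"
    unfolding tailed_adj by auto
  also have "\<dots> \<longleftrightarrow> (i \<le> k \<and> w = tail_vertex r (i - 1)) \<or> (i < k \<and> w = Inr (i + 1))"
  proof
    assume "\<exists>j<k. (w = tail_vertex r j \<and> j + 1 = i) \<or> (j = i \<and> w = tail_vertex r (j + 1))"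
    then obtain j where "j < k" "(w = tail_vertex r j \<and> j + 1 = i) \<or> (j = i \<and> w = tail_vertex r (j + 1))"
      by blast
    then show "(i \<le> k \<and> w = tail_vertex r (i - 1)) \<or> (i < k \<and> w = Inr (i + 1))"
      by (auto simp: tail_vertex_def)
  next
    assume "(i \<le> k \<and> w = tail_vertex r (i - 1)) \<or> (i < k \<and> w = Inr (i + 1))"
    then show "\<exists>j<k. (w = tail_vertex r j \<and> j + 1 = i) \<or> (j = i \<and> w = tail_vertex r (j + 1))"
    proof
      assume "i \<le> k \<and> w = tail_vertex r (i - 1)"
      then show ?thesis using assms by (intro exI[of _ "i - 1"]) auto
    next
      assume "i < k \<and> w = Inr (i + 1)"
      then show ?thesis by (intro exI[of _ i]) (simp add: tail_vertex_def)
    qed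
  qed
  finally show ?thesis .
qed

lemma csf_poly_tailed:
  assumes fin: "finite V" and r: "r \<in> V" and sym: "\<And>u v. E u v \<Longrightarrow> E v u"
  shows "csf_poly N (tailed (V, E) r k) = (\<Sum>\<kappa>\<in>colourings N E V. cweight V \<kappa> * tail_poly N k (\<kappa> r))"
proof -
  let ?adj = "snd (tailed (V, E) r k)"
  have path: "tail_vertex r ` {1..k} = Inr ` {1..k}"
    by (rule image_cong) (auto simp: tail_vertex_def)
  have "fst (tailed (V, E) r k) = Inl ` V \<union> tail_vertex r ` {1..k}"
    unfolding path by (simp add: tailed_def mk_graph_def)
  then have "csf_poly N (tailed (V, E) r k)
      = (\<Sum>\<kappa>\<in>colourings N ?adj (Inl ` V \<union> tail_vertex r ` {1..k}).
           cweight (Inl ` V \<union> tail_vertex r ` {1..k}) \<kappa> * (\<lambda>_. 1) (\<kappa> (tail_vertex r k)))"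
    by (simp add: csf_poly_def)
  also have "\<dots> = (\<Sum>\<kappa>\<in>colourings N ?adj (Inl ` V). cweight (Inl ` V) \<kappa> * tail_poly N k (\<kappa> (Inl r)))"
  proof (subst sum_colourings_path)
    show "inj_on (tail_vertex r) {1..k}"
      by (rule inj_onI) (simp add: tail_vertex_def split: if_splits)
    show "(?adj w (tail_vertex r i) \<or> ?adj (tail_vertex r i) w) \<longleftrightarrow> w = tail_vertex r (i - 1)"
      if "1 \<le> i" "i \<le> k" "w \<in> Inl ` V \<union> tail_vertex r ` {1..<i}" for i w
      using that tailed_adj_Inr[of i V E r k w] unfolding path by (auto simp: tail_vertex_def)
    show "\<not> ?adj (tail_vertex r i) (tail_vertex r i)" if "1 \<le> i" "i \<le> k" for i
    proof -
      have "Inr i \<noteq> tail_vertex r (i - 1)" using that by (simp add: tail_vertex_def) arith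
      then show ?thesis using that tailed_adj_Inr[of i V E r k "Inr i"] by (simp add: tail_vertex_def)
    qed
  qed (use fin r in \<open>auto simp: path tail_vertex_def tail_poly_def\<close>)
  also have "\<dots> = (\<Sum>\<kappa>\<in>colourings N E V. cweight V \<kappa> * tail_poly N k (\<kappa> r))"
  proof (rule sum_colourings_image)
    show "?adj (Inl a) (Inl b) \<longleftrightarrow> E a b" if "a \<in> V" "b \<in> V" for a b
      using that sym unfolding tailed_adj by (auto simp: tail_vertex_def)
  qed (simp_all add: r)
  finally show ?thesis .
qed

lemma lollipop_adj:
  "snd (lollipop z h) a b \<longleftrightarrow>
     (a < z \<and> b < z \<and> a \<noteq> b) \<or> (\<exists>i<h. (a = z - 1 + i \<and> b = z + i) \<or> (b = z - 1 + i \<and> a = z + i))"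
  unfolding lollipop_def mk_graph_def by auto

lemma lollipop_adj_path:
  assumes z: "z \<ge> 1" and i: "1 \<le> i"
  shows "(snd (lollipop z h) w (z - 1 + i) \<or> snd (lollipop z h) (z - 1 + i) w) \<longleftrightarrow>
     (i \<le> h \<and> w = z - 1 + (i - 1)) \<or> (i < h \<and> w = z + i)"
proof -
  have "(snd (lollipop z h) w (z - 1 + i) \<or> snd (lollipop z h) (z - 1 + i) w) \<longleftrightarrow>
     (\<exists>j<h. (w = z - 1 + j \<and> z - 1 + i = z + j) \<or> (z - 1 + i = z - 1 + j \<and> w = z + j))"
    unfolding lollipop_adj using z i by auto
  also have "\<dots> \<longleftrightarrow> (i \<le> h \<and> w = z - 1 + (i - 1)) \<or> (i < h \<and> w = z + i)"
  proof
    assume "\<exists>j<h. (w = z - 1 + j \<and> z - 1 + i = z + j) \<or> (z - 1 + i = z - 1 + j \<and> w = z + j)"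
    then obtain j where "j < h" "(w = z - 1 + j \<and> z - 1 + i = z + j) \<or> (z - 1 + i = z - 1 + j \<and> w = z + j)" by blast
    then show "(i \<le> h \<and> w = z - 1 + (i - 1)) \<or> (i < h \<and> w = z + i)" using z i by auto
  next
    assume "(i \<le> h \<and> w = z - 1 + (i - 1)) \<or> (i < h \<and> w = z + i)"
    then show "\<exists>j<h. (w = z - 1 + j \<and> z - 1 + i = z + j) \<or> (z - 1 + i = z - 1 + j \<and> w = z + j)"
    proof
      assume "i \<le> h \<and> w = z - 1 + (i - 1)"
      then show ?thesis using z i by (intro exI[of _ "i - 1"]) auto
    next
      assume "i < h \<and> w = z + i"
      then show ?thesis using z i by (intro exI[of _ i]) auto
    qed
  qed
  finally show ?thesis .
qed

lemma lollipop_adj_clique: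
  assumes z: "z \<ge> 1" and x: "x < z"
  shows "(snd (lollipop z h) w x \<or> snd (lollipop z h) x w) \<longleftrightarrow>
     (w < z \<and> w \<noteq> x) \<or> (x = z - 1 \<and> 0 < h \<and> w = z)"
proof -
  have "(snd (lollipop z h) w x \<or> snd (lollipop z h) x w) \<longleftrightarrow>
     (w < z \<and> w \<noteq> x) \<or> (\<exists>j<h. (w = z - 1 + j \<and> x = z + j) \<or> (x = z - 1 + j \<and> w = z + j))"
    unfolding lollipop_adj using x by auto
  also have "\<dots> \<longleftrightarrow> (w < z \<and> w \<noteq> x) \<or> (x = z - 1 \<and> 0 < h \<and> w = z)"
  proof -
    have "(\<exists>j<h. (w = z - 1 + j \<and> x = z + j) \<or> (x = z - 1 + j \<and> w = z + j)) \<longleftrightarrow> (x = z - 1 \<and> 0 < h \<and> w = z)"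
    proof
      assume "\<exists>j<h. (w = z - 1 + j \<and> x = z + j) \<or> (x = z - 1 + j \<and> w = z + j)"
      then obtain j where "j < h" "(w = z - 1 + j \<and> x = z + j) \<or> (x = z - 1 + j \<and> w = z + j)" by blast
      then show "x = z - 1 \<and> 0 < h \<and> w = z" using z x by auto
    next
      assume "x = z - 1 \<and> 0 < h \<and> w = z"
      then show "\<exists>j<h. (w = z - 1 + j \<and> x = z + j) \<or> (x = z - 1 + j \<and> w = z + j)"
        by (intro exI[of _ 0]) auto
    qed
    then show ?thesis by simp
  qed
  finally show ?thesis .
qed

definition lollipop_poly :: "nat \<Rightarrow> nat \<Rightarrow> nat \<Rightarrow> xpoly" where
  "lollipop_poly N h z = (\<Sum>q\<in>{1..N}. xvar q * tail_poly N h q * elem_fps ({1..N} - {q}) $ (z - 1))"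

lemma csf_poly_lollipop:
  assumes z: "z \<ge> 1"
  shows "csf_poly N (lollipop z h) = of_nat (fact (z - 1)) * lollipop_poly N h z"
proof -
  let ?adj = "snd (lollipop z h)"
  let ?u = "\<lambda>i. z - 1 + i"
  have "{0..<z+h} = {0..<z} \<union> ?u ` {1..h}"
  proof (intro set_eqI iffI)
    fix x assume "x \<in> {0..<z+h}"
    then show "x \<in> {0..<z} \<union> ?u ` {1..h}"
      using z by (cases "x < z") (auto simp: image_iff intro!: bexI[of _ "x + 1 - z"])
  qed (use z in auto)
  then have "csf_poly N (lollipop z h)
      = (\<Sum>\<kappa>\<in>colourings N ?adj ({0..<z} \<union> ?u ` {1..h}). cweight ({0..<z} \<union> ?u ` {1..h}) \<kappa> * (\<lambda>_. 1) (\<kappa> (?u h)))"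
    by (simp add: csf_poly_def lollipop_def mk_graph_def)
  also have "\<dots> = (\<Sum>\<kappa>\<in>colourings N ?adj {0..<z}. cweight {0..<z} \<kappa> * tail_poly N h (\<kappa> (z - 1)))"
  proof (subst sum_colourings_path)
    show "inj_on ?u {1..h}" by (auto simp: inj_on_def)
    show "?u ` {1..h} \<inter> {0..<z} = {}" using z by auto
  next
    fix i w assume i: "1 \<le> i" "i \<le> h" and w: "w \<in> {0..<z} \<union> ?u ` {1..<i}"
    have "w \<noteq> z + i" using w by auto
    then show "(?adj w (?u i) \<or> ?adj (?u i) w) \<longleftrightarrow> w = ?u (i - 1)"
      using lollipop_adj_path[OF z i(1), of h w] i by auto
  next
    fix i assume i: "1 \<le> i" "i \<le> h"
    have "\<not> ((i \<le> h \<and> z - 1 + i = z - 1 + (i - 1)) \<or> (i < h \<and> z - 1 + i = z + i))" using i z by auto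
    then show "\<not> ?adj (?u i) (?u i)"
      using lollipop_adj_path[OF z i(1), of h "z - 1 + i"] by blast
  qed (use z in \<open>simp_all add: tail_poly_def\<close>)
  also have "\<dots> = (\<Sum>\<kappa>\<in>colourings N ?adj {z - 1}.
      cweight {z - 1} \<kappa> * (tail_poly N h (\<kappa> (z - 1)) * distinct_colour_sum N (z - 1) {\<kappa> (z - 1)} (\<lambda>_. 1)))"
  proof -
    let ?w = "\<lambda>i. i - 1"
    have "{0..<z} = {z - 1} \<union> ?w ` {1..z - 1}"
    proof (intro set_eqI iffI)
      fix x assume "x \<in> {0..<z}"
      then show "x \<in> {z - 1} \<union> ?w ` {1..z - 1}"
        using z by (cases "x = z - 1") (auto simp: image_iff intro!: bexI[of _ "x + 1"])
    qed (use z in auto)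
    moreover have "(\<Sum>\<kappa>\<in>colourings N ?adj ({z - 1} \<union> ?w ` {1..z - 1}). cweight ({z - 1} \<union> ?w ` {1..z - 1}) \<kappa>
          * (\<lambda>\<kappa>. tail_poly N h (\<kappa> (z - 1))) (restrict \<kappa> {z - 1}) * (\<lambda>_. 1) (\<kappa> ` ({z - 1} \<union> ?w ` {1..z - 1})))
        = (\<Sum>\<kappa>\<in>colourings N ?adj {z - 1}. cweight {z - 1} \<kappa> * (\<lambda>\<kappa>. tail_poly N h (\<kappa> (z - 1))) \<kappa>
          * distinct_colour_sum N (z - 1) (\<kappa> ` {z - 1}) (\<lambda>_. 1))"
    proof (rule sum_colourings_clique)
      show "inj_on ?w {1..z - 1}" by (auto simp: inj_on_def)
      show "?w ` {1..z - 1} \<inter> {z - 1} = {}" by auto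
    next
      fix i y assume i: "1 \<le> i" "i \<le> z - 1" and y: "y \<in> {z - 1} \<union> ?w ` {1..<i}"
      have "y < z" "y \<noteq> i - 1" using y i z by auto
      then show "(?adj y (?w i) \<or> ?adj (?w i) y) \<longleftrightarrow> y \<in> {z - 1} \<union> ?w ` {1..<i}"
        using lollipop_adj_clique[OF z, of "i - 1" h y] i y by auto
    next
      fix i assume i: "1 \<le> i" "i \<le> z - 1"
      show "\<not> ?adj (?w i) (?w i)"
        using lollipop_adj_clique[OF z, of "i - 1" h "i - 1"] i by auto
    qed auto
    ultimately show ?thesis by (simp add: mult.assoc)
  qed
  also have "\<dots> = (\<Sum>q\<in>{1..N}. xvar q * (tail_poly N h q * distinct_colour_sum N (z - 1) {q} (\<lambda>_. 1)))"
    by (rule sum_colourings_singleton) (use lollipop_adj_clique[OF z, of "z - 1" h "z - 1"] z in auto)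
  also have "\<dots> = of_nat (fact (z - 1)) * lollipop_poly N h z"
    unfolding lollipop_poly_def sum_distrib_left
    by (intro sum.cong refl) (simp add: distinct_colour_sum_const mult_ac)
  finally show ?thesis .
qed

definition Kgh_arc ::
    "'a set \<Rightarrow> ('a \<Rightarrow> 'a \<Rightarrow> bool) \<Rightarrow> 'a \<Rightarrow> nat \<Rightarrow> nat \<Rightarrow> nat \<Rightarrow>
     ('a + nat \<times> nat) \<Rightarrow> ('a + nat \<times> nat) \<Rightarrow> bool" where
  "Kgh_arc V E r m g h a b \<longleftrightarrow>
     (\<exists>u v. a = Inl u \<and> b = Inl v \<and> u \<in> V \<and> v \<in> V \<and> E u v) \<or>
     (\<exists>i<g. a = Kgh_path r g i \<and> b = Kgh_path r g (i+1)) \<or>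
     (a \<in> Kgh_clique r g m \<and> b \<in> Kgh_clique r g m \<and> a \<noteq> b) \<or>
     (0 < h \<and> a = Inr (1,1) \<and> b = Inr (2,1)) \<or>
     (\<exists>i. 1 \<le> i \<and> i < h \<and> a = Inr (2,i) \<and> b = Inr (2,i+1))"

lemma Kgh_adj: "snd (Kgh (V, E) r m g h) a b \<longleftrightarrow> Kgh_arc V E r m g h a b \<or> Kgh_arc V E r m g h b a"
proof -
  have "(x, y) \<in> {(Inl u, Inl v) | u v. u \<in> V \<and> v \<in> V \<and> E u v} \<union>
      {(Kgh_path r g i, Kgh_path r g (i+1)) | i. i < g} \<union>
      {(u, v) | u v. u \<in> Kgh_clique r g m \<and> v \<in> Kgh_clique r g m \<and> u \<noteq> v} \<union>
      {(Inr (1, 1), Kgh_tail 1) | _::unit. 0 < h} \<union>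
      {(Kgh_tail i, Kgh_tail (i+1)) | i. 1 \<le> i \<and> i < h} \<longleftrightarrow> Kgh_arc V E r m g h x y" for x y
    unfolding Kgh_arc_def Kgh_tail_def by blast
  then show ?thesis by (simp add: Kgh_def mk_graph_def)
qed

lemma Kgh_path_eq_Inr [simp]:
  "Kgh_path r g i = Inr p \<longleftrightarrow> 0 < i \<and> (i = g \<and> p = (1, 0) \<or> i \<noteq> g \<and> p = (0, i))"
  "Inr p = Kgh_path r g i \<longleftrightarrow> 0 < i \<and> (i = g \<and> p = (1, 0) \<or> i \<noteq> g \<and> p = (0, i))"
  by (auto simp: Kgh_path_def Kgh_x_def)

lemma Kgh_x_eq_Inr [simp]: "Kgh_x r g = Inr p \<longleftrightarrow> 0 < g \<and> p = (1, 0)" "Inr p = Kgh_x r g \<longleftrightarrow> 0 < g \<and> p = (1, 0)"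
  by (auto simp: Kgh_x_def)

lemma Inr2_notin_Kgh_clique [simp]: "Inr (2, j) \<notin> Kgh_clique r g m"
  by (auto simp: Kgh_clique_def Kgh_x_def)

lemma Kgh_adj_tail:
  assumes "1 \<le> i" "i \<le> h"
  shows "(snd (Kgh (V,E) r m g h) w (Inr (2,i)) \<or> snd (Kgh (V,E) r m g h) (Inr (2,i)) w) \<longleftrightarrow>
     (i = 1 \<and> w = Inr (1,1)) \<or> (1 < i \<and> w = Inr (2, i - 1)) \<or> (i < h \<and> w = Inr (2, i + 1))"
proof -
  have a: "Kgh_arc V E r m g h w (Inr (2,i)) \<longleftrightarrow> (i = 1 \<and> w = Inr (1,1)) \<or> (1 < i \<and> w = Inr (2, i - 1))"
    unfolding Kgh_arc_def using assms by auto
  have b: "Kgh_arc V E r m g h (Inr (2,i)) w \<longleftrightarrow> (i < h \<and> w = Inr (2, i + 1))"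
    unfolding Kgh_arc_def using assms by auto
  show ?thesis unfolding Kgh_adj a b by blast
qed

lemma Kgh_adj_clique:
  assumes "2 \<le> j" "j < m"
  shows "(snd (Kgh (V,E) r m g h) w (Inr (1,j)) \<or> snd (Kgh (V,E) r m g h) (Inr (1,j)) w) \<longleftrightarrow>
     w \<in> Kgh_clique r g m \<and> w \<noteq> Inr (1,j)"
proof -
  obtain j' where j': "j = Suc j'" using assms by (cases j) auto
  have c: "Inr (1,j) \<in> Kgh_clique r g m" unfolding Kgh_clique_def using assms by auto
  have a: "Kgh_arc V E r m g h w (Inr (1,j)) \<longleftrightarrow> w \<in> Kgh_clique r g m \<and> w \<noteq> Inr (1,j)"
    unfolding Kgh_arc_def using assms c unfolding j' by auto
  have b: "Kgh_arc V E r m g h (Inr (1,j)) w \<longleftrightarrow> w \<in> Kgh_clique r g m \<and> w \<noteq> Inr (1,j)"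
    unfolding Kgh_arc_def using assms c unfolding j' by auto
  show ?thesis unfolding Kgh_adj a b by blast
qed

lemma Kgh_adj_y:
  assumes "2 \<le> m"
  shows "(snd (Kgh (V,E) r m g h) w (Inr (1,1)) \<or> snd (Kgh (V,E) r m g h) (Inr (1,1)) w) \<longleftrightarrow>
     (w \<in> Kgh_clique r g m \<and> w \<noteq> Inr (1,1)) \<or> (0 < h \<and> w = Inr (2,1))"
proof -
  have c: "Inr (1,1) \<in> Kgh_clique r g m" unfolding Kgh_clique_def using assms by auto
  have a: "Kgh_arc V E r m g h w (Inr (1,1)) \<longleftrightarrow> w \<in> Kgh_clique r g m \<and> w \<noteq> Inr (1,1)"
    unfolding Kgh_arc_def using assms c by auto
  have b: "Kgh_arc V E r m g h (Inr (1,1)) w \<longleftrightarrow>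
      (w \<in> Kgh_clique r g m \<and> w \<noteq> Inr (1,1)) \<or> (0 < h \<and> w = Inr (2,1))"
    unfolding Kgh_arc_def using assms c by auto
  show ?thesis unfolding Kgh_adj using a b by blast
qed

lemma Kgh_path_inj: "i \<le> g \<Longrightarrow> j \<le> g \<Longrightarrow> Kgh_path r g i = Kgh_path r g j \<longleftrightarrow> i = j"
  by (auto simp: Kgh_path_def Kgh_x_def split: if_splits)

lemma Kgh_path_in_clique: "1 \<le> i \<Longrightarrow> i \<le> g \<Longrightarrow> Kgh_path r g i \<in> Kgh_clique r g m \<longleftrightarrow> i = g"
  by (auto simp: Kgh_path_def Kgh_x_def Kgh_clique_def)

lemma Kgh_path_not_Inl: "1 \<le> i \<Longrightarrow> i \<le> g \<Longrightarrow> Kgh_path r g i \<noteq> Inl a"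
  by (auto simp: Kgh_path_def Kgh_x_def)

lemma Kgh_adj_path:
  assumes i: "1 \<le> i" "i \<le> g"
  shows "(snd (Kgh (V,E) r m g h) w (Kgh_path r g i) \<or> snd (Kgh (V,E) r m g h) (Kgh_path r g i) w) \<longleftrightarrow>
     w = Kgh_path r g (i - 1) \<or> (i < g \<and> w = Kgh_path r g (i + 1)) \<or>
     (i = g \<and> w \<in> Kgh_clique r g m \<and> w \<noteq> Kgh_path r g i)"
proof -
  have pc: "Kgh_path r g i \<in> Kgh_clique r g m \<longleftrightarrow> i = g" using Kgh_path_in_clique[OF i] .
  have n1: "Kgh_path r g i \<noteq> Inr (1, 1)" "Kgh_path r g i \<noteq> Inr (2, k)" for k
    by auto
  have a: "Kgh_arc V E r m g h w (Kgh_path r g i) \<longleftrightarrow>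
      w = Kgh_path r g (i - 1) \<or> (i = g \<and> w \<in> Kgh_clique r g m \<and> w \<noteq> Kgh_path r g i)"
  proof -
    have p: "(\<exists>j<g. w = Kgh_path r g j \<and> Kgh_path r g i = Kgh_path r g (j+1)) \<longleftrightarrow> w = Kgh_path r g (i - 1)"
    proof
      assume "\<exists>j<g. w = Kgh_path r g j \<and> Kgh_path r g i = Kgh_path r g (j+1)"
      then obtain j where "j < g" "w = Kgh_path r g j" "Kgh_path r g i = Kgh_path r g (j+1)" by blast
      then show "w = Kgh_path r g (i - 1)" using Kgh_path_inj[of i g "j+1" r] i by auto
    next
      assume "w = Kgh_path r g (i - 1)"
      then show "\<exists>j<g. w = Kgh_path r g j \<and> Kgh_path r g i = Kgh_path r g (j+1)"
        using i by (intro exI[of _ "i - 1"]) auto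
    qed
    have g: "\<not> (\<exists>u v. w = Inl u \<and> Kgh_path r g i = Inl v \<and> u \<in> V \<and> v \<in> V \<and> E u v)"
      using Kgh_path_not_Inl[OF i, of r] by blast
    show ?thesis unfolding Kgh_arc_def using p g pc n1 by auto
  qed
  have b: "Kgh_arc V E r m g h (Kgh_path r g i) w \<longleftrightarrow>
      (i < g \<and> w = Kgh_path r g (i + 1)) \<or> (i = g \<and> w \<in> Kgh_clique r g m \<and> w \<noteq> Kgh_path r g i)"
  proof -
    have p: "(\<exists>j<g. Kgh_path r g i = Kgh_path r g j \<and> w = Kgh_path r g (j+1)) \<longleftrightarrow>
        (i < g \<and> w = Kgh_path r g (i + 1))"
    proof
      assume "\<exists>j<g. Kgh_path r g i = Kgh_path r g j \<and> w = Kgh_path r g (j+1)"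
      then obtain j where "j < g" "Kgh_path r g i = Kgh_path r g j" "w = Kgh_path r g (j+1)" by blast
      then show "i < g \<and> w = Kgh_path r g (i + 1)" using Kgh_path_inj[of i g j r] i by auto
    qed auto
    have g: "\<not> (\<exists>u v. Kgh_path r g i = Inl u \<and> w = Inl v \<and> u \<in> V \<and> v \<in> V \<and> E u v)"
      using Kgh_path_not_Inl[OF i, of r] by blast
    show ?thesis unfolding Kgh_arc_def using p g pc n1 by auto
  qed
  show ?thesis unfolding Kgh_adj a b by blast
qed

lemma Kgh_adj_Inl:
  shows "snd (Kgh (V,E) r m g h) (Inl a) (Inl b) \<longleftrightarrow> (a \<in> V \<and> b \<in> V \<and> (E a b \<or> E b a))"
proof -
  have p: "\<not> (\<exists>j<g. Inl x = Kgh_path r g j \<and> Inl y = Kgh_path r g (j+1))" for x y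
    using Kgh_path_not_Inl[of "Suc _" g r] by (metis Suc_eq_plus1 Suc_leI le_add2 plus_1_eq_Suc)
  have c: "\<not> (Inl x \<in> Kgh_clique r g m \<and> Inl y \<in> Kgh_clique r g m \<and> (Inl x :: 'a + nat \<times> nat) \<noteq> Inl y)" for x y
    by (auto simp: Kgh_clique_def Kgh_x_def split: if_splits)
  have "Kgh_arc V E r m g h (Inl a) (Inl b) \<longleftrightarrow> a \<in> V \<and> b \<in> V \<and> E a b"
    unfolding Kgh_arc_def using p c by auto
  moreover have "Kgh_arc V E r m g h (Inl b) (Inl a) \<longleftrightarrow> a \<in> V \<and> b \<in> V \<and> E b a"
    unfolding Kgh_arc_def using p c by auto
  ultimately show ?thesis unfolding Kgh_adj by blast
qed

definition Kgh_base :: "'a set \<Rightarrow> 'a \<Rightarrow> nat \<Rightarrow> ('a + nat \<times> nat) set" where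
  "Kgh_base V r g = Inl ` V \<union> Kgh_path r g ` {1..g}"

definition Kgh_inner :: "nat \<Rightarrow> 'a + nat \<times> nat" where
  "Kgh_inner i = Inr (1, i + 1)"

lemma Kgh_x_in_base: "r \<in> V \<Longrightarrow> Kgh_x r g \<in> Kgh_base V r g"
proof (cases "g = 0")
  case False
  then have "Kgh_x r g = Kgh_path r g g" by (simp add: Kgh_path_def)
  moreover have "g \<in> {1..g}" using False by simp
  ultimately have "Kgh_x r g \<in> Kgh_path r g ` {1..g}" by (rule image_eqI)
  then show ?thesis by (simp add: Kgh_base_def)
qed (simp add: Kgh_base_def Kgh_x_def)

lemma Kgh_y_notin_base: "Inr (1, 1) \<notin> Kgh_base V r g"
  by (auto simp: Kgh_base_def)

lemma Kgh_clique_eq: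
  assumes "m \<ge> 2"
  shows "Kgh_clique r g m = insert (Kgh_x r g) (insert (Inr (1, 1)) (Kgh_inner ` {1..m - 2}))"
proof -
  have "{1..<m} = insert 1 ((\<lambda>i. i + 1) ` {1..m - 2})"
    using assms by (auto simp: image_add_atLeastAtMost)
  moreover have "{Inr (1, j) | j. 1 \<le> j \<and> j < m} = (\<lambda>j. Inr (1, j)) ` {1..<m}"
    by auto
  ultimately have "{Inr (1, j) | j. 1 \<le> j \<and> j < m} = insert (Inr (1, 1)) (Kgh_inner ` {1..m - 2})"
    by (simp only: image_insert image_image Kgh_inner_def[abs_def])
  then show ?thesis unfolding Kgh_clique_def by (rule arg_cong)
qed

lemma Kgh_vertices:
  assumes "r \<in> V" "m \<ge> 2"
  shows "fst (Kgh (V, E) r m g h)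
    = (insert (Inr (1, 1)) (Kgh_base V r g) \<union> Kgh_inner ` {1..m - 2}) \<union> Kgh_tail ` {1..h}"
proof -
  have "{0..g} = insert 0 {1..g}" by auto
  then have "Kgh_path r g ` {0..g} = insert (Kgh_path r g 0) (Kgh_path r g ` {1..g})"
    by (simp only: image_insert)
  then have "Kgh_path r g ` {0..g} = insert (Inl r) (Kgh_path r g ` {1..g})"
    by (simp add: Kgh_path_def)
  then show ?thesis
    unfolding Kgh_def mk_graph_def fst_conv Kgh_clique_eq[OF assms(2)]
    using Kgh_x_in_base[OF assms(1), of g] assms(1) by (auto simp: Kgh_base_def)
qed

text \<open>For a fixed colour \<open>s\<close> of \<open>x\<close>, the weight of the colourings of \<open>y\<close>, its tail and the other
  \<open>m - 2\<close> clique vertices, divided by \<open>(m - 2)!\<close>.\<close>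

definition clique_tail_poly :: "nat \<Rightarrow> nat \<Rightarrow> nat \<Rightarrow> nat \<Rightarrow> xpoly" where
  "clique_tail_poly N h m s =
     (\<Sum>q\<in>{1..N} - {s}. xvar q * tail_poly N h q * elem_fps ({1..N} - {s} - {q}) $ (m - 2))"

context
  fixes V :: "'a set" and E :: "'a \<Rightarrow> 'a \<Rightarrow> bool" and r :: 'a and m g h :: nat
  assumes fin: "finite V" and r: "r \<in> V" and sym: "\<And>u v. E u v \<Longrightarrow> E v u" and m: "m \<ge> 2"
begin

abbreviation (input) adjK where "adjK \<equiv> snd (Kgh (V, E) r m g h)"

lemma finite_Kgh_base: "finite (Kgh_base V r g)"
  using fin by (simp add: Kgh_base_def)

lemma csf_poly_Kgh_peel_tail:
  "csf_poly N (Kgh (V, E) r m g h)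
     = (\<Sum>\<kappa>\<in>colourings N adjK (insert (Inr (1, 1)) (Kgh_base V r g) \<union> Kgh_inner ` {1..m - 2}).
          cweight (insert (Inr (1, 1)) (Kgh_base V r g) \<union> Kgh_inner ` {1..m - 2}) \<kappa> * tail_poly N h (\<kappa> (Inr (1, 1))))"
proof -
  let ?B = "insert (Inr (1, 1)) (Kgh_base V r g) \<union> Kgh_inner ` {1..m - 2}"
  define u :: "nat \<Rightarrow> 'a + nat \<times> nat" where "u i = (if i = 0 then Inr (1, 1) else Kgh_tail i)" for i
  have "u ` {1..h} = Kgh_tail ` {1..h}" by (auto simp: u_def)
  then have "csf_poly N (Kgh (V, E) r m g h)
      = (\<Sum>\<kappa>\<in>colourings N adjK (?B \<union> u ` {1..h}). cweight (?B \<union> u ` {1..h}) \<kappa> * (\<lambda>_. 1) (\<kappa> (u h)))"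
    by (simp add: csf_poly_def Kgh_vertices[OF r m])
  also have "\<dots> = (\<Sum>\<kappa>\<in>colourings N adjK ?B. cweight ?B \<kappa> * tail_poly N h (\<kappa> (Inr (1, 1))))"
  proof (subst sum_colourings_path)
    show "finite ?B" using finite_Kgh_base by simp
    show "inj_on u {1..h}" by (rule inj_onI) (simp add: u_def Kgh_tail_def)
    show "u ` {1..h} \<inter> ?B = {}"
      by (auto simp: u_def Kgh_tail_def Kgh_base_def Kgh_inner_def)
  next
    fix i w assume i: "1 \<le> i" "i \<le> h" and w: "w \<in> ?B \<union> u ` {1..<i}"
    have "w \<noteq> Inr (2, i + 1)"
      using w by (auto simp: u_def Kgh_tail_def Kgh_base_def Kgh_inner_def)
    moreover have "u (i - 1) = (if i = 1 then Inr (1, 1) else Inr (2, i - 1))"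
      using i by (simp add: u_def Kgh_tail_def)
    ultimately show "(adjK w (u i) \<or> adjK (u i) w) \<longleftrightarrow> w = u (i - 1)"
      using Kgh_adj_tail[OF i, of V E r m g w] i by (auto simp: u_def Kgh_tail_def)
  next
    fix i assume i: "1 \<le> i" "i \<le> h"
    show "\<not> adjK (u i) (u i)"
      using Kgh_adj_tail[OF i, of V E r m g "Inr (2, i)"] i by (simp add: u_def Kgh_tail_def) arith
  qed (simp_all add: u_def tail_poly_def)
  finally show ?thesis .
qed

lemma sum_colourings_Kgh_peel_clique:
  "(\<Sum>\<kappa>\<in>colourings N adjK (insert (Inr (1, 1)) (Kgh_base V r g) \<union> Kgh_inner ` {1..m - 2}).
       cweight (insert (Inr (1, 1)) (Kgh_base V r g) \<union> Kgh_inner ` {1..m - 2}) \<kappa> * tail_poly N h (\<kappa> (Inr (1, 1))))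
   = (\<Sum>\<kappa>\<in>colourings N adjK (insert (Inr (1, 1)) (Kgh_base V r g)).
       cweight (insert (Inr (1, 1)) (Kgh_base V r g)) \<kappa> * tail_poly N h (\<kappa> (Inr (1, 1)))
       * distinct_colour_sum N (m - 2) {\<kappa> (Kgh_x r g), \<kappa> (Inr (1, 1))} (\<lambda>_. 1))"
proof -
  let ?B = "insert (Inr (1, 1)) (Kgh_base V r g)" and ?A = "{Kgh_x r g, Inr (1, 1)}"
  have "Kgh_x r g \<in> ?B" using Kgh_x_in_base[OF r] by simp
  have "(\<Sum>\<kappa>\<in>colourings N adjK (?B \<union> Kgh_inner ` {1..m - 2}). cweight (?B \<union> Kgh_inner ` {1..m - 2}) \<kappa>
        * (\<lambda>\<kappa>. tail_poly N h (\<kappa> (Inr (1, 1)))) (restrict \<kappa> ?B) * (\<lambda>_. 1) (\<kappa> ` (?A \<union> Kgh_inner ` {1..m - 2})))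
      = (\<Sum>\<kappa>\<in>colourings N adjK ?B. cweight ?B \<kappa> * (\<lambda>\<kappa>. tail_poly N h (\<kappa> (Inr (1, 1)))) \<kappa>
        * distinct_colour_sum N (m - 2) (\<kappa> ` ?A) (\<lambda>_. 1))"
  proof (rule sum_colourings_clique)
    show "finite ?B" using finite_Kgh_base by simp
    show "?A \<subseteq> ?B" using Kgh_x_in_base[OF r] by simp
    show "inj_on Kgh_inner {1..m - 2}" by (rule inj_onI) (simp add: Kgh_inner_def)
    show "Kgh_inner ` {1..m - 2} \<inter> ?B = {}"
      by (auto simp: Kgh_inner_def Kgh_base_def)
  next
    fix i y assume i: "1 \<le> i" "i \<le> m - 2" and y: "y \<in> ?B \<union> Kgh_inner ` {1..<i}"
    have j: "2 \<le> i + 1" "i + 1 < m" using i m by auto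
    have "y \<in> Kgh_clique r g m \<and> y \<noteq> Inr (1, i + 1) \<longleftrightarrow> y \<in> ?A \<union> Kgh_inner ` {1..<i}"
    proof
      assume "y \<in> Kgh_clique r g m \<and> y \<noteq> Inr (1, i + 1)"
      moreover have "y \<notin> Kgh_inner ` {1..m - 2} - Kgh_inner ` {1..<i}"
        using y by (auto simp: Kgh_inner_def Kgh_base_def)
      ultimately show "y \<in> ?A \<union> Kgh_inner ` {1..<i}"
        unfolding Kgh_clique_eq[OF m] by blast
    next
      assume "y \<in> ?A \<union> Kgh_inner ` {1..<i}"
      then show "y \<in> Kgh_clique r g m \<and> y \<noteq> Inr (1, i + 1)"
        using i unfolding Kgh_clique_eq[OF m] by (auto simp: Kgh_inner_def Kgh_x_def)
    qed
    then show "(adjK y (Kgh_inner i) \<or> adjK (Kgh_inner i) y) \<longleftrightarrow> y \<in> ?A \<union> Kgh_inner ` {1..<i}"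
      using Kgh_adj_clique[OF j, of V E r g h y] by (simp add: Kgh_inner_def)
  next
    fix i assume i: "1 \<le> i" "i \<le> m - 2"
    have j: "2 \<le> i + 1" "i + 1 < m" using i m by auto
    show "\<not> adjK (Kgh_inner i) (Kgh_inner i)"
      using Kgh_adj_clique[OF j, of V E r g h "Kgh_inner i"] by (simp add: Kgh_inner_def)
  qed
  then show ?thesis
    using \<open>Kgh_x r g \<in> ?B\<close> by (simp add: insert_commute)
qed

lemma sum_colourings_Kgh_peel_y:
  "(\<Sum>\<kappa>\<in>colourings N adjK (insert (Inr (1, 1)) (Kgh_base V r g)).
       cweight (insert (Inr (1, 1)) (Kgh_base V r g)) \<kappa> * tail_poly N h (\<kappa> (Inr (1, 1)))
       * distinct_colour_sum N (m - 2) {\<kappa> (Kgh_x r g), \<kappa> (Inr (1, 1))} (\<lambda>_. 1))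
   = of_nat (fact (m - 2)) *
     (\<Sum>\<kappa>\<in>colourings N adjK (Kgh_base V r g). cweight (Kgh_base V r g) \<kappa> * clique_tail_poly N h m (\<kappa> (Kgh_x r g)))"
proof -
  let ?B = "Kgh_base V r g" and ?x = "Kgh_x r g" and ?y = "Inr (1, 1) :: 'a + nat \<times> nat"
  have "?x \<in> ?B" by (rule Kgh_x_in_base[OF r])
  have "(\<Sum>\<kappa>\<in>colourings N adjK (insert ?y ?B). cweight (insert ?y ?B) \<kappa>
        * (\<lambda>\<kappa>' q. tail_poly N h q * distinct_colour_sum N (m - 2) {\<kappa>' ?x, q} (\<lambda>_. 1)) (restrict \<kappa> ?B) (\<kappa> ?y))
      = (\<Sum>\<kappa>\<in>colourings N adjK ?B. cweight ?B \<kappa>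
        * (\<Sum>q\<in>{1..N} - \<kappa> ` {?x}. xvar q * (tail_poly N h q * distinct_colour_sum N (m - 2) {\<kappa> ?x, q} (\<lambda>_. 1))))"
  proof (rule sum_colourings_insert)
    show "finite ?B" by (rule finite_Kgh_base)
    show "?y \<notin> ?B" by (rule Kgh_y_notin_base)
    show "\<not> adjK ?y ?y" using Kgh_adj_y[OF m, of V E r g h ?y] by simp
    show "{?x} \<subseteq> ?B" using \<open>?x \<in> ?B\<close> by simp
    fix u assume u: "u \<in> ?B"
    have "u \<notin> Kgh_inner ` {1..m - 2}" "u \<noteq> Inr (2, 1)"
      using u by (auto simp: Kgh_inner_def Kgh_base_def)
    then have "(u \<in> Kgh_clique r g m \<and> u \<noteq> ?y) \<or> (0 < h \<and> u = Inr (2, 1)) \<longleftrightarrow> u = ?x"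
      unfolding Kgh_clique_eq[OF m] by (auto simp: Kgh_x_def)
    then show "(adjK u ?y \<or> adjK ?y u) \<longleftrightarrow> u \<in> {?x}"
      using Kgh_adj_y[OF m, of V E r g h u] by simp
  qed
  also have "\<dots> = (\<Sum>\<kappa>\<in>colourings N adjK ?B. cweight ?B \<kappa> * (of_nat (fact (m - 2)) * clique_tail_poly N h m (\<kappa> ?x)))"
  proof (intro sum.cong refl arg_cong[where f="(*) _"])
    fix \<kappa> assume "\<kappa> \<in> colourings N adjK ?B"
    then have s: "\<kappa> ?x \<in> {1..N}"
      using \<open>?x \<in> ?B\<close> unfolding colourings_def by (blast dest: PiE_mem)
    have "distinct_colour_sum N (m - 2) {\<kappa> ?x, q} (\<lambda>_. 1)
        = of_nat (fact (m - 2)) * elem_fps ({1..N} - {\<kappa> ?x} - {q}) $ (m - 2)" if "q \<in> {1..N}" for q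
    proof -
      have "{\<kappa> ?x, q} \<subseteq> {1..N}" using s that by simp
      moreover have "{1..N} - {\<kappa> ?x, q} = {1..N} - {\<kappa> ?x} - {q}" by auto
      ultimately show ?thesis by (simp add: distinct_colour_sum_const)
    qed
    then show "(\<Sum>q\<in>{1..N} - \<kappa> ` {?x}. xvar q * (tail_poly N h q * distinct_colour_sum N (m - 2) {\<kappa> ?x, q} (\<lambda>_. 1)))
        = of_nat (fact (m - 2)) * clique_tail_poly N h m (\<kappa> ?x)"
      unfolding clique_tail_poly_def sum_distrib_left by (intro sum.cong) (auto simp: mult_ac)
  qed
  finally show ?thesis
    using \<open>?x \<in> ?B\<close> by (simp add: sum_distrib_left mult_ac)
qed

lemma sum_colourings_Kgh_peel_path:
  "(\<Sum>\<kappa>\<in>colourings N adjK (Kgh_base V r g). cweight (Kgh_base V r g) \<kappa> * \<Phi> (\<kappa> (Kgh_x r g)))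
   = (\<Sum>\<kappa>\<in>colourings N E V. cweight V \<kappa> * (\<Sum>s\<in>{1..N}. walk N g (\<kappa> r) s * \<Phi> s))"
proof -
  have start: "Kgh_path r g 0 = Inl r" by (simp add: Kgh_path_def)
  have "Kgh_x r g = Kgh_path r g g" by (simp add: Kgh_path_def Kgh_x_def)
  then have "(\<Sum>\<kappa>\<in>colourings N adjK (Kgh_base V r g). cweight (Kgh_base V r g) \<kappa> * \<Phi> (\<kappa> (Kgh_x r g)))
      = (\<Sum>\<kappa>\<in>colourings N adjK (Inl ` V \<union> Kgh_path r g ` {1..g}).
          cweight (Inl ` V \<union> Kgh_path r g ` {1..g}) \<kappa> * \<Phi> (\<kappa> (Kgh_path r g g)))"
    by (simp add: Kgh_base_def)
  also have "\<dots> = (\<Sum>\<kappa>\<in>colourings N adjK (Inl ` V). cweight (Inl ` V) \<kappa>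
          * (\<lambda>p. \<Sum>s\<in>{1..N}. walk N g p s * \<Phi> s) (\<kappa> (Inl r)))"
  proof (subst sum_colourings_path)
    show "finite (Inl ` V)" using fin by simp
    show "inj_on (Kgh_path r g) {1..g}" by (rule inj_onI) (simp add: Kgh_path_inj)
    show "Kgh_path r g ` {1..g} \<inter> Inl ` V = {}" using Kgh_path_not_Inl by fastforce
  next
    fix i w assume i: "1 \<le> i" "i \<le> g" and w: "w \<in> Inl ` V \<union> Kgh_path r g ` {1..<i}"
    have "\<not> (i < g \<and> w = Kgh_path r g (i + 1)) \<and> \<not> (i = g \<and> w \<in> Kgh_clique r g m \<and> w \<noteq> Kgh_path r g i)"
    proof (cases "w \<in> Inl ` V")
      case True
      then obtain a where "w = Inl a" by blast
      then show ?thesis using i Kgh_path_not_Inl[of "i + 1" g r a] by (auto simp: Kgh_clique_def Kgh_x_def)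
    next
      case False
      then obtain j where "j \<in> {1..<i}" "w = Kgh_path r g j" using w by auto
      then show ?thesis using i Kgh_path_inj[of j g "i + 1" r] Kgh_path_in_clique[of j g r m] by auto
    qed
    then show "(adjK w (Kgh_path r g i) \<or> adjK (Kgh_path r g i) w) \<longleftrightarrow> w = Kgh_path r g (i - 1)"
      using Kgh_adj_path[OF i, of V E r m h w] by blast
  next
    fix i assume i: "1 \<le> i" "i \<le> g"
    have "Kgh_path r g i \<noteq> Kgh_path r g (i - 1)" "\<not> (i < g \<and> Kgh_path r g i = Kgh_path r g (i + 1))"
      using Kgh_path_inj[of i g "i - 1" r] Kgh_path_inj[of i g "i + 1" r] i by auto
    then show "\<not> adjK (Kgh_path r g i) (Kgh_path r g i)"
      using Kgh_adj_path[OF i, of V E r m h "Kgh_path r g i"] by blast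
  qed (use r start in simp_all)
  also have "\<dots> = (\<Sum>\<kappa>\<in>colourings N E V. cweight V \<kappa> * (\<Sum>s\<in>{1..N}. walk N g (\<kappa> r) s * \<Phi> s))"
  proof (rule sum_colourings_image)
    show "adjK (Inl a) (Inl b) \<longleftrightarrow> E a b" if "a \<in> V" "b \<in> V" for a b
      using that Kgh_adj_Inl[of V E r m g h a b] sym by blast
  qed (simp_all add: r)
  finally show ?thesis .
qed

end

text \<open>The right-hand side of the theorem, with the tailed graphs \<open>G^k\<close> replaced by \<open>T k\<close>.\<close>

definition clique_expansion :: "nat \<Rightarrow> nat \<Rightarrow> nat \<Rightarrow> (nat \<Rightarrow> xpoly) \<Rightarrow> xpoly" where
  "clique_expansion N h m T =
     (\<Sum>z=1..m-1. of_nat z * elem_fps {1..N} $ (m - 1 - z) * T (h + z))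
     - of_nat (m - 2) * (\<Sum>z=1..m-1. lollipop_poly N h z * T (m - 1 - z))"

lemma sum_mult_sum_swap:
  fixes f g :: "_ \<Rightarrow> 'a::comm_semiring_0"
  shows "(\<Sum>x\<in>A. f x * (\<Sum>y\<in>B. g y * h x y)) = (\<Sum>y\<in>B. g y * (\<Sum>x\<in>A. f x * h x y))"
  by (simp add: sum_distrib_left mult_ac) (rule sum.swap)

lemma sum_mult_clique_expansion:
  "(\<Sum>s\<in>S. w s * clique_expansion N h m (T s)) = clique_expansion N h m (\<lambda>k. \<Sum>s\<in>S. w s * T s k)"
proof -
  have "(\<Sum>s\<in>S. w s * (c * (\<Sum>z\<in>Z. l z * T s (k z)))) = c * (\<Sum>z\<in>Z. l z * (\<Sum>s\<in>S. w s * T s (k z)))"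
    for c :: xpoly and Z l k
  proof -
    have "(\<Sum>s\<in>S. w s * (c * (\<Sum>z\<in>Z. l z * T s (k z)))) = c * (\<Sum>s\<in>S. w s * (\<Sum>z\<in>Z. l z * T s (k z)))"
      by (simp add: sum_distrib_left mult_ac)
    then show ?thesis by (simp only: sum_mult_sum_swap[where f=w and A=S and g=l and B=Z])
  qed
  then show ?thesis
    unfolding clique_expansion_def right_diff_distrib sum_subtractf
    by (intro arg_cong2[where f="(-)"] sum_mult_sum_swap)
qed

lemma clique_tail_poly_eq:
  assumes s: "s \<in> {1..N}" and m: "m \<ge> 2"
  shows "clique_tail_poly N h m s = clique_expansion N h m (\<lambda>k. tail_poly N k s)"
proof -
  let ?C = "{1..N::nat}" and ?c = "m - 2"
  have c: "m - 1 = ?c + 1" using m by simp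
  have tail_add: "tail_poly N (h + z) s = (\<Sum>q\<in>?C. xvar q * tail_poly N h q * walk_avoid N (z - 1) s q)"
    if "1 \<le> z" for z
  proof -
    have "walk N z s q = xvar q * walk_avoid N (z - 1) s q" for q
      using that by (cases z) (simp_all add: walk_avoid_def)
    then show ?thesis using tail_poly_add[of N z h s] by (simp add: add.commute mult_ac)
  qed
  have "(\<Sum>z=1..m-1. of_nat z * elem_fps ?C $ (m - 1 - z) * tail_poly N (h + z) s)
      = (\<Sum>z=1..?c+1. of_nat z * elem_fps ?C $ (?c + 1 - z) *
          (\<Sum>q\<in>?C. xvar q * tail_poly N h q * walk_avoid N (z - 1) s q))"
    unfolding c by (intro sum.cong refl) (simp add: tail_add)
  also have "\<dots> = (\<Sum>q\<in>?C. xvar q * tail_poly N h q *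
          (\<Sum>z=1..?c+1. of_nat z * elem_fps ?C $ (?c + 1 - z) * walk_avoid N (z - 1) s q))"
    by (rule sum_mult_sum_swap)
  finally have first: "(\<Sum>z=1..m-1. of_nat z * elem_fps ?C $ (m - 1 - z) * tail_poly N (h + z) s)
      = (\<Sum>q\<in>?C. xvar q * tail_poly N h q *
          (\<Sum>z=1..?c+1. of_nat z * elem_fps ?C $ (?c + 1 - z) * walk_avoid N (z - 1) s q))" .
  have "(\<Sum>z=1..m-1. lollipop_poly N h z * tail_poly N (m - 1 - z) s)
      = (\<Sum>z=1..?c+1. tail_poly N (?c + 1 - z) s *
          (\<Sum>q\<in>?C. xvar q * tail_poly N h q * elem_fps (?C - {q}) $ (z - 1)))"
    unfolding c lollipop_poly_def by (simp add: mult.commute)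
  also have "\<dots> = (\<Sum>q\<in>?C. xvar q * tail_poly N h q *
          (\<Sum>z=1..?c+1. tail_poly N (?c + 1 - z) s * elem_fps (?C - {q}) $ (z - 1)))"
    by (rule sum_mult_sum_swap)
  also have "\<dots> = (\<Sum>q\<in>?C. xvar q * tail_poly N h q *
          (\<Sum>z=1..?c+1. elem_fps (?C - {q}) $ (z - 1) * tail_poly N (?c + 1 - z) s))"
    by (intro sum.cong refl arg_cong[where f="(*) _"]) (simp add: mult.commute)
  finally have second: "(\<Sum>z=1..m-1. lollipop_poly N h z * tail_poly N (m - 1 - z) s)
      = (\<Sum>q\<in>?C. xvar q * tail_poly N h q *
          (\<Sum>z=1..?c+1. elem_fps (?C - {q}) $ (z - 1) * tail_poly N (?c + 1 - z) s))" .
  have lin: "(\<Sum>q\<in>?C. a q * X q) - c * (\<Sum>q\<in>?C. a q * Y q) = (\<Sum>q\<in>?C. a q * (X q - c * Y q))"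
    for a X Y :: "nat \<Rightarrow> xpoly" and c
    by (simp add: sum_subtractf sum_distrib_left right_diff_distrib mult_ac)
  have "clique_expansion N h m (\<lambda>k. tail_poly N k s)
      = (\<Sum>q\<in>?C. xvar q * tail_poly N h q * (if q \<noteq> s then elem_fps (?C - {s} - {q}) $ ?c else 0))"
    unfolding clique_expansion_def first second lin
    by (intro sum.cong refl arg_cong[where f="(*) _"] elem_fps_remove_pair_eq[OF s, symmetric])
  also have "\<dots> = clique_tail_poly N h m s"
    unfolding clique_tail_poly_def by (rule sum.mono_neutral_cong_right) auto
  finally show ?thesis ..
qed

lemma csf_poly_Kgh:
  fixes V :: "'a set"
  assumes fin: "finite V" and r: "r \<in> V" and sym: "\<And>u v. E u v \<Longrightarrow> E v u" and m: "m \<ge> 2"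
  shows "csf_poly N (Kgh (V, E) r m g h)
    = of_nat (fact (m - 2)) * clique_expansion N h m (\<lambda>k. csf_poly N (tailed (V, E) r (g + k)))"
proof -
  have walk_sum: "(\<Sum>s\<in>{1..N}. walk N g p s * clique_tail_poly N h m s)
      = clique_expansion N h m (\<lambda>k. tail_poly N (g + k) p)" for p
  proof -
    have "(\<Sum>s\<in>{1..N}. walk N g p s * clique_tail_poly N h m s)
        = (\<Sum>s\<in>{1..N}. walk N g p s * clique_expansion N h m (\<lambda>k. tail_poly N k s))"
      using m by (intro sum.cong refl) (simp add: clique_tail_poly_eq)
    then show ?thesis by (simp add: sum_mult_clique_expansion tail_poly_add)
  qed
  have "csf_poly N (Kgh (V, E) r m g h) = of_nat (fact (m - 2)) *
      (\<Sum>\<kappa>\<in>colourings N E V. cweight V \<kappa> * (\<Sum>s\<in>{1..N}. walk N g (\<kappa> r) s * clique_tail_poly N h m s))"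
    using assms
    by (simp only: csf_poly_Kgh_peel_tail sum_colourings_Kgh_peel_clique sum_colourings_Kgh_peel_y
        sum_colourings_Kgh_peel_path[where \<Phi>="clique_tail_poly N h m"])
  also have "\<dots> = of_nat (fact (m - 2)) * clique_expansion N h m (\<lambda>k. csf_poly N (tailed (V, E) r (g + k)))"
    by (simp only: walk_sum sum_mult_clique_expansion csf_poly_tailed[OF fin r sym])
  finally show ?thesis .
qed

lemma lookup_of_nat_mult: "Poly_Mapping.lookup (of_nat n * P :: xpoly) \<alpha> = of_nat n * Poly_Mapping.lookup P \<alpha>"
  by (induction n) (simp_all add: lookup_add distrib_right)

lemma sf_mult_eq_lookup_mult:
  assumes "\<forall>i\<in>Poly_Mapping.keys \<alpha>. i \<le> N"
    and "\<And>\<beta>. \<forall>i\<in>Poly_Mapping.keys \<beta>. i \<le> N \<Longrightarrow> f \<beta> = Poly_Mapping.lookup P \<beta>"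
    and "\<And>\<gamma>. \<forall>i\<in>Poly_Mapping.keys \<gamma>. i \<le> N \<Longrightarrow> g \<gamma> = Poly_Mapping.lookup Q \<gamma>"
  shows "sf_mult f g \<alpha> = Poly_Mapping.lookup (P * Q) \<alpha>"
proof -
  have "f \<beta> * g \<gamma> = Poly_Mapping.lookup P \<beta> * Poly_Mapping.lookup Q \<gamma>" if "\<beta> + \<gamma> = \<alpha>" for \<beta> \<gamma>
  proof -
    have "Poly_Mapping.keys \<beta> \<subseteq> Poly_Mapping.keys \<alpha>" "Poly_Mapping.keys \<gamma> \<subseteq> Poly_Mapping.keys \<alpha>"
      using that by (auto simp: in_keys_iff lookup_add)
    then show ?thesis using assms by (metis subsetD)
  qed
  then have "sf_mult f g \<alpha> = sf_mult (Poly_Mapping.lookup P) (Poly_Mapping.lookup Q) \<alpha>"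
    unfolding sf_mult_def by (intro sum.cong refl) auto
  then show ?thesis by (simp add: sf_mult_lookup)
qed

lemma lookup_clique_expansion:
  "Poly_Mapping.lookup (clique_expansion N h m T) \<alpha>
     = (\<Sum>z=1..m-1. of_nat z * Poly_Mapping.lookup (elem_fps {1..N} $ (m - 1 - z) * T (h + z)) \<alpha>)
       - of_nat (m - 2) * (\<Sum>z=1..m-1. Poly_Mapping.lookup (lollipop_poly N h z * T (m - 1 - z)) \<alpha>)"
  unfolding clique_expansion_def
  by (simp add: lookup_minus lookup_sum lookup_of_nat_mult mult.assoc del: of_nat_fact)

lemma csf_tailed_eq_lookup:
  "finite V \<Longrightarrow> \<forall>i\<in>Poly_Mapping.keys \<beta>. i \<le> N \<Longrightarrow>
     csf (tailed (V, E) r k) \<beta> = Poly_Mapping.lookup (csf_poly N (tailed (V, E) r k)) \<beta>"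
  by (rule csf_eq_lookup_csf_poly) (simp_all add: tailed_def mk_graph_def)

lemma csf_lollipop_eq_lookup:
  "z \<ge> 1 \<Longrightarrow> \<forall>i\<in>Poly_Mapping.keys \<beta>. i \<le> N \<Longrightarrow>
     csf (lollipop z h) \<beta> = Poly_Mapping.lookup (of_nat (fact (z - 1)) * lollipop_poly N h z) \<beta>"
  using csf_eq_lookup_csf_poly[of "lollipop z h" \<beta> N] csf_poly_lollipop[of z N h]
  by (simp add: lollipop_def mk_graph_def del: of_nat_fact)

lemma csf_Kgh_eq_lookup:
  fixes V :: "'a set"
  assumes "finite V" "r \<in> V" "\<And>u v. E u v \<Longrightarrow> E v u" "m \<ge> 2" "\<forall>i\<in>Poly_Mapping.keys \<alpha>. i \<le> N"
  shows "csf (Kgh (V, E) r m g h) \<alpha> / of_nat (fact (m - 2))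
    = Poly_Mapping.lookup (clique_expansion N h m (\<lambda>k. csf_poly N (tailed (V, E) r (g + k)))) \<alpha>"
proof -
  have "finite (fst (Kgh (V, E) r m g h))"
    using assms(1) by (simp add: Kgh_def mk_graph_def Kgh_clique_eq[OF assms(4)] Kgh_inner_def)
  then show ?thesis
    using assms(5)
    by (simp add: csf_eq_lookup_csf_poly csf_poly_Kgh[OF assms(1-4)] lookup_of_nat_mult del: of_nat_fact)
qed

lemma sf_mult_elem_sf_csf_tailed:
  assumes "finite V" "\<forall>i\<in>Poly_Mapping.keys \<alpha>. i \<le> N"
  shows "sf_mult (elem_sf k) (csf (tailed (V, E) r j)) \<alpha>
     = Poly_Mapping.lookup (elem_fps {1..N} $ k * csf_poly N (tailed (V, E) r j)) \<alpha>"
  using assms(2) elem_sf_eq_lookup csf_tailed_eq_lookup[OF assms(1)] by (rule sf_mult_eq_lookup_mult)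

lemma sf_mult_csf_lollipop_csf_tailed:
  assumes "finite V" "\<forall>i\<in>Poly_Mapping.keys \<alpha>. i \<le> N" "z \<ge> 1"
  shows "sf_mult (csf (lollipop z h)) (csf (tailed (V, E) r j)) \<alpha> / of_nat (fact (z - 1))
     = Poly_Mapping.lookup (lollipop_poly N h z * csf_poly N (tailed (V, E) r j)) \<alpha>"
proof -
  have "sf_mult (csf (lollipop z h)) (csf (tailed (V, E) r j)) \<alpha>
      = Poly_Mapping.lookup (of_nat (fact (z - 1)) * lollipop_poly N h z * csf_poly N (tailed (V, E) r j)) \<alpha>"
    using assms(2) csf_lollipop_eq_lookup[OF assms(3)] csf_tailed_eq_lookup[OF assms(1)]
    by (rule sf_mult_eq_lookup_mult)
  then show ?thesis by (simp add: mult.assoc lookup_of_nat_mult del: of_nat_fact)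
qed

theorem theorem5p2:
  fixes V :: "'a set" and E :: "'a \<Rightarrow> 'a \<Rightarrow> bool" and r :: 'a
    and g h m :: nat
  assumes "finite V" and "r \<in> V"
    and "\<And>u v. E u v \<Longrightarrow> E v u" and "\<And>v. \<not> E v v"
    and "m \<ge> 2"
  shows "csf (Kgh (V, E) r m g h) \<alpha> / of_nat (fact (m - 2)) =
     (\<Sum>z=1..m-1. of_nat z * sf_mult (elem_sf (m - 1 - z)) (csf (tailed (V, E) r (g + h + z))) \<alpha>)
     - of_nat (m - 2) *
       (\<Sum>z=1..m-1. sf_mult (csf (lollipop z h)) (csf (tailed (V, E) r (m - 1 - z + g))) \<alpha>
                      / of_nat (fact (z - 1)))"
proof -
  \<comment> \<open>Loops make both sides vanish.\<close>
  define N where "N = Max (insert 0 (Poly_Mapping.keys \<alpha>))"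
  have N: "\<forall>i\<in>Poly_Mapping.keys \<alpha>. i \<le> N" unfolding N_def by simp
  have "csf (Kgh (V, E) r m g h) \<alpha> / of_nat (fact (m - 2))
      = Poly_Mapping.lookup (clique_expansion N h m (\<lambda>k. csf_poly N (tailed (V, E) r (g + k)))) \<alpha>"
    using assms(1-3,5) N by (rule csf_Kgh_eq_lookup)
  then show ?thesis
    unfolding lookup_clique_expansion sf_mult_elem_sf_csf_tailed[OF assms(1) N]
    using sf_mult_csf_lollipop_csf_tailed[OF assms(1) N] by (simp add: add_ac)
qed

end
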